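(* Typechecking of $\beta$-normal terms in System $\mathsf{F_{<:}^\top}$ is decidable: there is an algorithm which, given a $\beta$-normal $\mathsf{F_{<:}^\top}$ term-in-context $\Theta\vdash^\top t$ and an $\mathsf{F_{<:}^\top}$ type $\Theta\vdash^\top T$, decides whether $\Theta\vdash^\top t:T$ is derivable in System $\mathsf{F_{<:}^\top}$.
   Context: System $\mathsf{F_{<:}^\top}$: raw types $T ::= \top \mid X \mid T\to T \mid \forall(X<:T).T$, up to $\alpha$-conversion. Contexts $\Theta$: finite sequences of $X<:T$ or $x:T$ with distinct variables, each type well-formed over the preceding part. Subtyping $\Theta\vdash^\top S<:T$: (Var) $\Theta,X<:T,\Theta'\vdash X<:T$; (Top) $T<:\top$; (Refl) $T<:T$; (Trans) from $T<:T'$, $T'<:T''$ infer $T<:T''$; ($\to$) from $\Theta\vdash S'<:S$, $\Theta\vdash T<:T'$ infer $\Theta\vdash S\to T<:S'\to T'$; ($\forall$-Top) from $\Theta\vdash T_0<:S_0$ and $\Theta,X<:\top\vdash S_1<:T_1$ infer $\Theta\vdash\forall(X<:S_0).S_1<:\forall(X<:T_0).T_1$. Raw terms $t ::= \mathsf{top}\mid x\mid\lambda(x:T).t\mid\Lambda(X<:T).t\mid t\,t\mid t\{T\}$. Typing $\Theta\vdash^\top t:T$: $\Theta\vdash\mathsf{top}:\top$; $\Theta,x:T,\Theta'\vdash x:T$; (sub) from $t:T$ and $T<:T'$ infer $t:T'$; from $\Theta,x:S\vdash t:T$ infer $\Theta\vdash\lambda(x:S).t:S\to T$; from $t:S\to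 T$ and $s:S$ infer $t\,s:T$; from $\Theta,X<:S\vdash t:T$ infer $\Theta\vdash\Lambda(X<:S).t:\forall(X<:S).T$; from $\Theta\vdash t:\forall(X<:S).T$ and $\Theta\vdash S'<:S$ infer $\Theta\vdash t\{S'\}:T[S'/X]$. A term is $\beta$-normal if it has no subterm of the form $(\lambda(x:S).t)\,s$ or $(\Lambda(X<:S).t)\{R\}$. *)

theory Defs
  imports Main "HOL-Library.Nat_Bijection"
begin

text \<open>Uniform de Bruijn indices over contexts: index i refers to the i-th binding
  of the context counted from the most recent one (the head of the list).
  Type variables and term variables share one index space (as in the standard
  POPLmark de Bruijn mechanisation).\<close>

datatype ty = Top | TVar nat | Arr ty ty | All ty ty
  \<comment> \<open>All S T  is  forall (X <: S). T  with X bound as index 0 in T\<close>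

datatype trm = TopT | Var nat | Abs ty trm | TAbs ty trm | App trm trm | TApp trm ty

datatype binding = VarB ty | TVarB ty
  \<comment> \<open>VarB T is  x : T,  TVarB T is  X <: T\<close>

type_synonym env = "binding list"

primrec liftT :: "nat \<Rightarrow> nat \<Rightarrow> ty \<Rightarrow> ty" where
  "liftT n k Top = Top"
| "liftT n k (TVar i) = (if i < k then TVar i else TVar (i + n))"
| "liftT n k (Arr S T) = Arr (liftT n k S) (liftT n k T)"
| "liftT n k (All S T) = All (liftT n k S) (liftT n (Suc k) T)"

text \<open>substT T k U: replace index k by U (U lives in the context below position k),
  decrementing the indices above k.\<close>
primrec substT :: "ty \<Rightarrow> nat \<Rightarrow> ty \<Rightarrow> ty" where
  "substT Top k U = Top"
| "substT (TVar i) k U = (if k < i then TVar (i - 1) else if i = k then liftT k 0 U else TVar i)"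
| "substT (Arr S T) k U = Arr (substT S k U) (substT T k U)"
| "substT (All S T) k U = All (substT S k U) (substT T (Suc k) U)"

fun is_TVarB :: "binding \<Rightarrow> bool" where
  "is_TVarB (TVarB _) = True" | "is_TVarB (VarB _) = False"

fun is_VarB :: "binding \<Rightarrow> bool" where
  "is_VarB (VarB _) = True" | "is_VarB (TVarB _) = False"

fun bty :: "binding \<Rightarrow> ty" where
  "bty (VarB T) = T" | "bty (TVarB T) = T"

primrec wfT :: "env \<Rightarrow> ty \<Rightarrow> bool" where
  "wfT \<Gamma> Top = True"
| "wfT \<Gamma> (TVar i) = (i < length \<Gamma> \<and> is_TVarB (\<Gamma> ! i))"
| "wfT \<Gamma> (Arr S T) = (wfT \<Gamma> S \<and> wfT \<Gamma> T)"
| "wfT \<Gamma> (All S T) = (wfT \<Gamma> S \<and> wfT (TVarB S # \<Gamma>) T)"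

primrec wfE :: "env \<Rightarrow> bool" where
  "wfE [] = True"
| "wfE (B # \<Gamma>) = (wfE \<Gamma> \<and> wfT \<Gamma> (bty B))"

primrec wf_trm :: "env \<Rightarrow> trm \<Rightarrow> bool" where
  "wf_trm \<Gamma> TopT = True"
| "wf_trm \<Gamma> (Var i) = (i < length \<Gamma> \<and> is_VarB (\<Gamma> ! i))"
| "wf_trm \<Gamma> (Abs S t) = (wfT \<Gamma> S \<and> wf_trm (VarB S # \<Gamma>) t)"
| "wf_trm \<Gamma> (TAbs S t) = (wfT \<Gamma> S \<and> wf_trm (TVarB S # \<Gamma>) t)"
| "wf_trm \<Gamma> (App s t) = (wf_trm \<Gamma> s \<and> wf_trm \<Gamma> t)"
| "wf_trm \<Gamma> (TApp t S) = (wf_trm \<Gamma> t \<and> wfT \<Gamma> S)"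

inductive subtype :: "env \<Rightarrow> ty \<Rightarrow> ty \<Rightarrow> bool" ("_ \<turnstile>\<^sub>s _ <: _" [50, 50, 50] 50) where
  SA_Var: "wfE \<Gamma> \<Longrightarrow> i < length \<Gamma> \<Longrightarrow> \<Gamma> ! i = TVarB U \<Longrightarrow> \<Gamma> \<turnstile>\<^sub>s TVar i <: liftT (Suc i) 0 U"
| SA_Top: "wfE \<Gamma> \<Longrightarrow> wfT \<Gamma> S \<Longrightarrow> \<Gamma> \<turnstile>\<^sub>s S <: Top"
| SA_Refl: "wfE \<Gamma> \<Longrightarrow> wfT \<Gamma> S \<Longrightarrow> \<Gamma> \<turnstile>\<^sub>s S <: S"
| SA_Trans: "\<Gamma> \<turnstile>\<^sub>s S <: T \<Longrightarrow> \<Gamma> \<turnstile>\<^sub>s T <: U \<Longrightarrow> \<Gamma> \<turnstile>\<^sub>s S <: U"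
| SA_Arr: "\<Gamma> \<turnstile>\<^sub>s S' <: S \<Longrightarrow> \<Gamma> \<turnstile>\<^sub>s T <: T' \<Longrightarrow> \<Gamma> \<turnstile>\<^sub>s Arr S T <: Arr S' T'"
| SA_All_Top: "\<Gamma> \<turnstile>\<^sub>s T0 <: S0 \<Longrightarrow> TVarB Top # \<Gamma> \<turnstile>\<^sub>s S1 <: T1 \<Longrightarrow>
      \<Gamma> \<turnstile>\<^sub>s All S0 S1 <: All T0 T1"

inductive typing :: "env \<Rightarrow> trm \<Rightarrow> ty \<Rightarrow> bool" ("_ \<turnstile>\<^sub>t _ : _" [50, 50, 50] 50) where
  T_Top: "wfE \<Gamma> \<Longrightarrow> \<Gamma> \<turnstile>\<^sub>t TopT : Top"
| T_Var: "wfE \<Gamma> \<Longrightarrow> i < length \<Gamma> \<Longrightarrow> \<Gamma> ! i = VarB U \<Longrightarrow> \<Gamma> \<turnstile>\<^sub>t Var i : liftT (Suc i) 0 U"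
| T_Sub: "\<Gamma> \<turnstile>\<^sub>t t : T \<Longrightarrow> \<Gamma> \<turnstile>\<^sub>s T <: T' \<Longrightarrow> \<Gamma> \<turnstile>\<^sub>t t : T'"
| T_Abs: "VarB S # \<Gamma> \<turnstile>\<^sub>t t : T \<Longrightarrow> \<Gamma> \<turnstile>\<^sub>t Abs S t : Arr S (substT T 0 Top)"
    \<comment> \<open>substT T 0 Top just removes the (term-variable) binder index 0 from T\<close>
| T_App: "\<Gamma> \<turnstile>\<^sub>t s : Arr S T \<Longrightarrow> \<Gamma> \<turnstile>\<^sub>t t : S \<Longrightarrow> \<Gamma> \<turnstile>\<^sub>t App s t : T"
| T_TAbs: "TVarB S # \<Gamma> \<turnstile>\<^sub>t t : T \<Longrightarrow> \<Gamma> \<turnstile>\<^sub>t TAbs S t : All S T"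
| T_TApp: "\<Gamma> \<turnstile>\<^sub>t t : All S T \<Longrightarrow> \<Gamma> \<turnstile>\<^sub>s S' <: S \<Longrightarrow> \<Gamma> \<turnstile>\<^sub>t TApp t S' : substT T 0 S'"

primrec beta_normal :: "trm \<Rightarrow> bool" where
  "beta_normal TopT = True"
| "beta_normal (Var i) = True"
| "beta_normal (Abs S t) = beta_normal t"
| "beta_normal (TAbs S t) = beta_normal t"
| "beta_normal (App s t) = ((\<forall>S u. s \<noteq> Abs S u) \<and> beta_normal s \<and> beta_normal t)"
| "beta_normal (TApp t S) = ((\<forall>R u. t \<noteq> TAbs R u) \<and> beta_normal t)"

datatype recf = Z | Sc | Id nat | Cn recf "recf list" | Pr recf recf | Mn recf

inductive rec_eval :: "recf \<Rightarrow> nat list \<Rightarrow> nat \<Rightarrow> bool" where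
  ev_Z: "rec_eval Z xs 0"
| ev_S: "rec_eval Sc (x # xs) (Suc x)"
| ev_Id: "i < length xs \<Longrightarrow> rec_eval (Id i) xs (xs ! i)"
| ev_Cn: "list_all2 (\<lambda>g y. rec_eval g xs y) gs ys \<Longrightarrow> rec_eval f ys r \<Longrightarrow> rec_eval (Cn f gs) xs r"
| ev_Pr0: "rec_eval f xs r \<Longrightarrow> rec_eval (Pr f g) (0 # xs) r"
| ev_PrS: "rec_eval (Pr f g) (n # xs) r \<Longrightarrow> rec_eval g (n # r # xs) r' \<Longrightarrow>
      rec_eval (Pr f g) (Suc n # xs) r'"
| ev_Mn: "rec_eval f (n # xs) 0 \<Longrightarrow> (\<forall>m<n. \<exists>r. rec_eval f (m # xs) r \<and> 0 < r) \<Longrightarrow>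
      rec_eval (Mn f) xs n"

primrec enc_ty :: "ty \<Rightarrow> nat" where
  "enc_ty Top = prod_encode (0, 0)"
| "enc_ty (TVar i) = prod_encode (1, i)"
| "enc_ty (Arr S T) = prod_encode (2, prod_encode (enc_ty S, enc_ty T))"
| "enc_ty (All S T) = prod_encode (3, prod_encode (enc_ty S, enc_ty T))"

primrec enc_trm :: "trm \<Rightarrow> nat" where
  "enc_trm TopT = prod_encode (0, 0)"
| "enc_trm (Var i) = prod_encode (1, i)"
| "enc_trm (Abs S t) = prod_encode (2, prod_encode (enc_ty S, enc_trm t))"
| "enc_trm (TAbs S t) = prod_encode (3, prod_encode (enc_ty S, enc_trm t))"
| "enc_trm (App s t) = prod_encode (4, prod_encode (enc_trm s, enc_trm t))"
| "enc_trm (TApp t S) = prod_encode (5, prod_encode (enc_trm t, enc_ty S))"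

fun enc_binding :: "binding \<Rightarrow> nat" where
  "enc_binding (VarB T) = prod_encode (0, enc_ty T)"
| "enc_binding (TVarB T) = prod_encode (1, enc_ty T)"

definition enc_env :: "env \<Rightarrow> nat" where
  "enc_env \<Gamma> = list_encode (map enc_binding \<Gamma>)"

definition enc_input :: "env \<Rightarrow> trm \<Rightarrow> ty \<Rightarrow> nat" where
  "enc_input \<Gamma> t T = prod_encode (enc_env \<Gamma>, prod_encode (enc_trm t, enc_ty T))"

end

theory Submission
  imports Defs
begin

(* Typing of beta-normal terms is decided by the bidirectional algorithm. A neutral term has a
   least type, synthesised from its head variable by exposing bounds of type variables and
   instantiating quantifiers, and it has type T iff that type is an algorithmic subtype of T; an
   abstraction is checked against the arrow or quantifier it has to inhabit. Under the forall-top
   rule algorithmic subtyping is transitive, and it terminates because unfolding a variable to its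
   bound decreases a weight.
   The algorithm is mu-recursive by one general principle: a function on codes given by
   well-founded recursion with two nested recursive calls, whose individual steps are computable,
   is computable. It is evaluated by a stack machine, iterated by primitive recursion and stopped
   by minimisation. *)

section \<open>Computable functions on codes\<close>

definition npair :: "nat \<Rightarrow> nat \<Rightarrow> nat" where "npair a b = prod_encode (a, b)"
definition nfst :: "nat \<Rightarrow> nat" where "nfst n = fst (prod_decode n)"
definition nsnd :: "nat \<Rightarrow> nat" where "nsnd n = snd (prod_decode n)"

lemma nfst_npair [simp]: "nfst (npair a b) = a" by (simp add: nfst_def npair_def)
lemma nsnd_npair [simp]: "nsnd (npair a b) = b" by (simp add: nsnd_def npair_def)
lemma npair_nfst_nsnd [simp]: "npair (nfst n) (nsnd n) = n"
  by (simp add: nfst_def nsnd_def npair_def)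
lemma npair_eq_iff [simp]: "npair a b = npair c d \<longleftrightarrow> a = c \<and> b = d" by (simp add: npair_def)
lemma npair_eq_triangle: "npair a b = triangle (a + b) + a" by (simp add: npair_def prod_encode_def)

definition computable_on :: "(nat \<Rightarrow> bool) \<Rightarrow> (nat \<Rightarrow> nat) \<Rightarrow> bool" where
  "computable_on P f \<longleftrightarrow> (\<exists>r. \<forall>x. P x \<longrightarrow> rec_eval r [x] (f x))"

lemma rec_eval_Pr:
  assumes "rec_eval f xs (H 0)" and "\<And>m. rec_eval g (m # H m # xs) (H (Suc m))"
  shows "rec_eval (Pr f g) (n # xs) (H n)"
  by (induct n) (auto intro: rec_eval.intros assms)

lemma rec_eval_Cn1: "rec_eval g xs y \<Longrightarrow> rec_eval f [y] r \<Longrightarrow> rec_eval (Cn f [g]) xs r"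
  by (rule ev_Cn[where ys="[y]"]) auto

lemma rec_eval_Cn2:
  "rec_eval g1 xs y1 \<Longrightarrow> rec_eval g2 xs y2 \<Longrightarrow> rec_eval f [y1, y2] r \<Longrightarrow> rec_eval (Cn f [g1, g2]) xs r"
  by (rule ev_Cn[where ys="[y1, y2]"]) auto

lemma rec_eval_Id0: "rec_eval (Id 0) (x # xs) x"
  using ev_Id[of 0 "x # xs"] by simp

lemma rec_eval_Id1: "rec_eval (Id 1) (x # y # xs) y"
  using ev_Id[of 1 "x # y # xs"] by simp

lemma rec_eval_Id2: "rec_eval (Id 2) (x # y # z # xs) z"
  using ev_Id[of 2 "x # y # z # xs"] by (simp add: numeral_2_eq_2)

lemmas rec_eval_Id = rec_eval_Id0 rec_eval_Id1 rec_eval_Id2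
  rec_eval_Id1[unfolded One_nat_def] rec_eval_Id2[unfolded numeral_2_eq_2]

lemma rec_eval_cong_result: "rec_eval r xs y \<Longrightarrow> y = z \<Longrightarrow> rec_eval r xs z"
  by simp

definition recf_add :: recf where "recf_add = Pr (Id 0) (Cn Sc [Id 1])"

lemma rec_eval_add: "rec_eval recf_add [n, x] (n + x)"
  unfolding recf_add_def
  by (rule rec_eval_Pr[where H="\<lambda>m. m + x"]) (auto intro: rec_eval_Id ev_S rec_eval_Cn1)

definition recf_pred :: recf where "recf_pred = Pr Z (Id 0)"

lemma rec_eval_pred: "rec_eval recf_pred [n, x] (n - 1)"
  unfolding recf_pred_def by (rule rec_eval_Pr[where H="\<lambda>m. m - 1"]) (auto intro: rec_eval_Id0 ev_Z)

definition recf_diff_flip :: recf where "recf_diff_flip = Pr (Id 0) (Cn recf_pred [Id 1, Id 1])"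

lemma rec_eval_diff_flip: "rec_eval recf_diff_flip [y, x] (x - y)"
  unfolding recf_diff_flip_def
proof (rule rec_eval_Pr[where H="\<lambda>m. x - m"])
  show "rec_eval (Id 0) [x] (x - 0)" using rec_eval_Id0 by simp
  show "rec_eval (Cn recf_pred [Id 1, Id 1]) [m, x - m, x] (x - Suc m)" for m
    by (rule rec_eval_cong_result[OF rec_eval_Cn2[OF rec_eval_Id1 rec_eval_Id1 rec_eval_pred]]) simp
qed

definition recf_diff :: recf where "recf_diff = Cn recf_diff_flip [Id 1, Id 0]"

lemma rec_eval_diff: "rec_eval recf_diff [x, y] (x - y)"
  unfolding recf_diff_def by (rule rec_eval_Cn2[OF rec_eval_Id1 rec_eval_Id0 rec_eval_diff_flip])

definition recf_mult :: recf where "recf_mult = Pr Z (Cn recf_add [Id 1, Id 2])"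

lemma rec_eval_mult: "rec_eval recf_mult [n, x] (n * x)"
  unfolding recf_mult_def
proof (rule rec_eval_Pr[where H="\<lambda>m. m * x"])
  show "rec_eval Z [x] (0 * x)" using ev_Z by simp
  show "rec_eval (Cn recf_add [Id 1, Id 2]) [m, m * x, x] (Suc m * x)" for m
    by (rule rec_eval_cong_result[OF rec_eval_Cn2[OF rec_eval_Id1 rec_eval_Id2 rec_eval_add]]) simp
qed

definition recf_triangle :: recf where "recf_triangle = Pr Z (Cn recf_add [Id 1, Cn Sc [Id 0]])"

lemma rec_eval_triangle: "rec_eval recf_triangle [n, x] (triangle n)"
  unfolding recf_triangle_def
proof (rule rec_eval_Pr[where H=triangle])
  show "rec_eval Z [x] (triangle 0)" using ev_Z by simp
  show "rec_eval (Cn recf_add [Id 1, Cn Sc [Id 0]]) [m, triangle m, x] (triangle (Suc m))" for m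
    by (rule rec_eval_cong_result[OF
          rec_eval_Cn2[OF rec_eval_Id1 rec_eval_Cn1[OF rec_eval_Id0 ev_S] rec_eval_add]]) simp
qed

definition recf_npair :: recf where
  "recf_npair = Cn recf_add [Cn recf_triangle [Cn recf_add [Id 0, Id 1], Id 0], Id 0]"

lemma rec_eval_npair: "rec_eval recf_npair [a, b] (npair a b)"
  unfolding recf_npair_def npair_eq_triangle
  by (rule rec_eval_Cn2[OF rec_eval_Cn2[OF rec_eval_Cn2[OF rec_eval_Id0 rec_eval_Id1 rec_eval_add]
        rec_eval_Id0 rec_eval_triangle] rec_eval_Id0 rec_eval_add])

text \<open>The Cantor pairing enumerates the diagonals \<open>a + b = s\<close> one after the other;
  \<open>diag p\<close> is the diagonal on which \<open>p\<close> lies, found by minimisation.\<close>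

definition diag :: "nat \<Rightarrow> nat" where "diag p = (LEAST s. p < triangle (Suc s))"

lemma diag_bounds: "triangle (diag p) \<le> p \<and> p < triangle (Suc (diag p))"
proof
  have "p \<le> triangle p" by (induct p) auto
  then have "p < triangle (Suc p)" by simp
  then show "p < triangle (Suc (diag p))" unfolding diag_def by (rule LeastI)
  show "triangle (diag p) \<le> p"
  proof (cases "diag p")
    case (Suc s)
    then have "s < diag p" by simp
    then have "\<not> p < triangle (Suc s)" unfolding diag_def by (rule not_less_Least)
    then show ?thesis using Suc by simp
  qed simp
qed

lemma nfst_nsnd_diag:
  "nfst p = p - triangle (diag p) \<and> nsnd p = diag p - (p - triangle (diag p))"
proof -
  define a where "a = p - triangle (diag p)"
  have "a \<le> diag p" "triangle (diag p) + a = p" using diag_bounds[of p] unfolding a_def by auto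
  then have "npair a (diag p - a) = p" unfolding npair_eq_triangle by simp
  then have "nfst p = a \<and> nsnd p = diag p - a" by (metis nfst_npair nsnd_npair)
  then show ?thesis unfolding a_def .
qed

definition recf_diag :: recf where
  "recf_diag = Mn (Cn recf_diff [Cn Sc [Id 1], Cn recf_triangle [Cn Sc [Id 0], Id 0]])"

lemma rec_eval_diag: "rec_eval recf_diag [p] (diag p)"
proof -
  let ?test = "Cn recf_diff [Cn Sc [Id 1], Cn recf_triangle [Cn Sc [Id 0], Id 0]]"
  have test: "rec_eval ?test [s, p] (Suc p - triangle (Suc s))" for s
    by (rule rec_eval_Cn2[OF rec_eval_Cn1[OF rec_eval_Id1 ev_S] rec_eval_Cn2[OF
          rec_eval_Cn1[OF rec_eval_Id0 ev_S] rec_eval_Id0 rec_eval_triangle] rec_eval_diff])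
  show ?thesis unfolding recf_diag_def
  proof (rule ev_Mn)
    show "rec_eval ?test [diag p, p] 0" using test[of "diag p"] diag_bounds[of p] by simp
    show "\<forall>m<diag p. \<exists>r. rec_eval ?test [m, p] r \<and> 0 < r"
    proof (intro allI impI exI conjI)
      fix m assume "m < diag p"
      then have "\<not> p < triangle (Suc m)" unfolding diag_def by (rule not_less_Least)
      then show "0 < Suc p - triangle (Suc m)" by simp
    qed (rule test)
  qed
qed

definition recf_nfst :: recf where
  "recf_nfst = Cn recf_diff [Id 0, Cn recf_triangle [recf_diag, Id 0]]"

lemma rec_eval_nfst: "rec_eval recf_nfst [p] (nfst p)"
  unfolding recf_nfst_def nfst_nsnd_diag[THEN conjunct1]
  by (rule rec_eval_Cn2[OF rec_eval_Id0
        rec_eval_Cn2[OF rec_eval_diag rec_eval_Id0 rec_eval_triangle] rec_eval_diff])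

definition recf_nsnd :: recf where "recf_nsnd = Cn recf_diff [recf_diag, recf_nfst]"

lemma rec_eval_nsnd: "rec_eval recf_nsnd [p] (nsnd p)"
  unfolding recf_nsnd_def
  by (rule rec_eval_cong_result[OF rec_eval_Cn2[OF rec_eval_diag rec_eval_nfst rec_eval_diff]])
    (simp add: nfst_nsnd_diag)

lemma computable_on_binop:
  "(\<And>a b. rec_eval r [a, b] (F a b)) \<Longrightarrow> computable_on P a \<Longrightarrow> computable_on P b \<Longrightarrow>
    computable_on P (\<lambda>x. F (a x) (b x))"
  unfolding computable_on_def by (blast intro: rec_eval_Cn2)

lemma computable_on_add:
  "computable_on P a \<Longrightarrow> computable_on P b \<Longrightarrow> computable_on P (\<lambda>x. a x + b x)"
  by (rule computable_on_binop[OF rec_eval_add])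

lemma computable_on_diff:
  "computable_on P a \<Longrightarrow> computable_on P b \<Longrightarrow> computable_on P (\<lambda>x. a x - b x)"
  by (rule computable_on_binop[OF rec_eval_diff])

lemma computable_on_mult:
  "computable_on P a \<Longrightarrow> computable_on P b \<Longrightarrow> computable_on P (\<lambda>x. a x * b x)"
  by (rule computable_on_binop[OF rec_eval_mult])

lemma computable_on_npair:
  "computable_on P a \<Longrightarrow> computable_on P b \<Longrightarrow> computable_on P (\<lambda>x. npair (a x) (b x))"
  by (rule computable_on_binop[OF rec_eval_npair])

lemma computable_on_id: "computable_on P (\<lambda>x. x)"
  unfolding computable_on_def using rec_eval_Id0 by blast

lemma computable_on_Suc: "computable_on P a \<Longrightarrow> computable_on P (\<lambda>x. Suc (a x))"
  unfolding computable_on_def by (blast intro: rec_eval_Cn1 ev_S)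

lemma computable_on_const: "computable_on P (\<lambda>x. c)"
proof (induct c)
  case 0
  show ?case unfolding computable_on_def using ev_Z by blast
qed (rule computable_on_Suc)

lemma computable_on_nfst: "computable_on P a \<Longrightarrow> computable_on P (\<lambda>x. nfst (a x))"
  unfolding computable_on_def by (blast intro: rec_eval_Cn1 rec_eval_nfst)

lemma computable_on_nsnd: "computable_on P a \<Longrightarrow> computable_on P (\<lambda>x. nsnd (a x))"
  unfolding computable_on_def by (blast intro: rec_eval_Cn1 rec_eval_nsnd)

lemma computable_on_comp:
  "computable_on Q F \<Longrightarrow> computable_on P a \<Longrightarrow> (\<And>x. P x \<Longrightarrow> Q (a x)) \<Longrightarrow> computable_on P (\<lambda>x. F (a x))"
  unfolding computable_on_def by (blast intro: rec_eval_Cn1)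

lemma computable_on_subset: "computable_on Q F \<Longrightarrow> (\<And>x. P x \<Longrightarrow> Q x) \<Longrightarrow> computable_on P F"
  unfolding computable_on_def by blast

lemma computable_on_cong: "computable_on P F \<Longrightarrow> (\<And>x. P x \<Longrightarrow> F x = G x) \<Longrightarrow> computable_on P G"
  unfolding computable_on_def by metis

lemma computable_on_eq:
  assumes "computable_on P a" and "computable_on P b"
  shows "computable_on P (\<lambda>x. of_bool (a x = b x))"
proof (rule computable_on_cong)
  show "computable_on P (\<lambda>x. 1 - ((a x - b x) + (b x - a x)))"
    by (intro computable_on_diff computable_on_add computable_on_const assms)
qed auto

lemma computable_on_less:
  assumes "computable_on P a" and "computable_on P b"
  shows "computable_on P (\<lambda>x. of_bool (a x < b x))"
proof (rule computable_on_cong)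
  show "computable_on P (\<lambda>x. 1 - (1 - (b x - a x)))"
    by (intro computable_on_diff computable_on_const assms)
qed auto

lemma computable_on_le:
  assumes "computable_on P a" and "computable_on P b"
  shows "computable_on P (\<lambda>x. of_bool (a x \<le> b x))"
proof (rule computable_on_cong)
  show "computable_on P (\<lambda>x. 1 - (a x - b x))"
    by (intro computable_on_diff computable_on_const assms)
qed auto

lemma computable_on_conj:
  assumes "computable_on P (\<lambda>x. of_bool (A x))" and "computable_on P (\<lambda>x. of_bool (B x))"
  shows "computable_on P (\<lambda>x. of_bool (A x \<and> B x))"
proof (rule computable_on_cong)
  show "computable_on P (\<lambda>x. of_bool (A x) * of_bool (B x))" by (intro computable_on_mult assms)
qed auto

lemma computable_on_not:
  assumes "computable_on P (\<lambda>x. of_bool (A x))"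
  shows "computable_on P (\<lambda>x. of_bool (\<not> A x))"
proof (rule computable_on_cong)
  show "computable_on P (\<lambda>x. 1 - of_bool (A x))"
    by (intro computable_on_diff computable_on_const assms)
qed auto

lemma computable_on_disj:
  assumes "computable_on P (\<lambda>x. of_bool (A x))" and "computable_on P (\<lambda>x. of_bool (B x))"
  shows "computable_on P (\<lambda>x. of_bool (A x \<or> B x))"
  using computable_on_not[OF computable_on_conj[OF computable_on_not computable_on_not, OF assms]]
  by simp

text \<open>A primitive recursion runs its step function only for nonzero counters, so it yields a
  conditional that does not need the untaken branch to be defined.\<close>

lemma rec_eval_guarded:
  assumes "k = 0 \<or> (k = 1 \<and> rec_eval r [x] v)"
  shows "rec_eval (Pr Z (Cn r [Id 2])) [k, x] (if k = 0 then 0 else v)"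
  using assms
proof
  assume "k = 0"
  then show ?thesis by (simp add: ev_Pr0 ev_Z)
next
  assume k: "k = 1 \<and> rec_eval r [x] v"
  have "rec_eval (Pr Z (Cn r [Id 2])) [Suc 0, x] v"
    by (rule ev_PrS[where r=0])
      (auto intro!: ev_Pr0 ev_Z rec_eval_Cn1 rec_eval_Id k[THEN conjunct2])
  then show ?thesis using k by simp
qed

lemma computable_on_if:
  assumes "computable_on P (\<lambda>x. of_bool (c x))"
    and "computable_on (\<lambda>x. P x \<and> c x) a" and "computable_on (\<lambda>x. P x \<and> \<not> c x) b"
  shows "computable_on P (\<lambda>x. if c x then a x else b x)"
proof -
  obtain rc where rc: "\<And>x. P x \<Longrightarrow> rec_eval rc [x] (of_bool (c x))"
    using assms(1) unfolding computable_on_def by blast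
  obtain ra where ra: "\<And>x. P x \<and> c x \<Longrightarrow> rec_eval ra [x] (a x)"
    using assms(2) unfolding computable_on_def by blast
  obtain rb where rb: "\<And>x. P x \<and> \<not> c x \<Longrightarrow> rec_eval rb [x] (b x)"
    using assms(3) unfolding computable_on_def by blast
  have "rec_eval (Cn recf_add [Cn (Pr Z (Cn ra [Id 2])) [rc, Id 0],
      Cn (Pr Z (Cn rb [Id 2])) [Cn recf_diff [Cn Sc [Z], rc], Id 0]])
      [x] (if c x then a x else b x)" if "P x" for x
  proof -
    have A: "rec_eval (Pr Z (Cn ra [Id 2])) [of_bool (c x), x] (if c x then a x else 0)"
      using rec_eval_guarded[of "of_bool (c x)" ra x "a x"] ra that by auto
    have B: "rec_eval (Pr Z (Cn rb [Id 2])) [1 - of_bool (c x), x] (if c x then 0 else b x)"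
      using rec_eval_guarded[of "1 - of_bool (c x)" rb x "b x"] rb that by auto
    have C: "rec_eval (Cn recf_diff [Cn Sc [Z], rc]) [x] (1 - of_bool (c x))"
      by (rule rec_eval_cong_result[OF
            rec_eval_Cn2[OF rec_eval_Cn1[OF ev_Z ev_S] rc[OF that] rec_eval_diff]])
        simp
    show ?thesis
      by (rule rec_eval_cong_result[OF rec_eval_Cn2[OF rec_eval_Cn2[OF rc[OF that] rec_eval_Id0 A]
            rec_eval_Cn2[OF C rec_eval_Id0 B] rec_eval_add]]) simp
  qed
  then show ?thesis unfolding computable_on_def by blast
qed

lemma computable_on_funpow:
  assumes s: "computable_on Q s" and Q_s: "\<And>y. Q y \<Longrightarrow> Q (s y)"
    and n: "computable_on P n" and z: "computable_on P z" and Q_z: "\<And>x. P x \<Longrightarrow> Q (z x)"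
  shows "computable_on P (\<lambda>x. (s ^^ n x) (z x))"
proof -
  obtain rs where rs: "\<And>y. Q y \<Longrightarrow> rec_eval rs [y] (s y)" using s unfolding computable_on_def by blast
  obtain rn where rn: "\<And>x. P x \<Longrightarrow> rec_eval rn [x] (n x)" using n unfolding computable_on_def by blast
  obtain rz where rz: "\<And>x. P x \<Longrightarrow> rec_eval rz [x] (z x)" using z unfolding computable_on_def by blast
  have Q_funpow: "Q y \<Longrightarrow> Q ((s ^^ m) y)" for y m by (induct m) (auto intro: Q_s)
  have iterate: "Q y \<Longrightarrow> rec_eval (Pr (Id 0) (Cn rs [Id 1])) [m, y] ((s ^^ m) y)" for y m
    by (rule rec_eval_Pr[where H="\<lambda>m. (s ^^ m) y"])
      (auto intro!: rec_eval_Id rec_eval_Cn1 rs Q_funpow)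
  show ?thesis unfolding computable_on_def
    by (blast intro: rec_eval_Cn2[OF rn rz iterate] Q_z)
qed

lemma computable_on_Least:
  assumes g: "computable_on Q g" and Q_g: "\<And>x n. P x \<Longrightarrow> Q (npair n x)"
    and ex: "\<And>x. P x \<Longrightarrow> \<exists>n. g (npair n x) = 0"
  shows "computable_on P (\<lambda>x. LEAST n. g (npair n x) = 0)"
proof -
  obtain rg where rg: "\<And>y. Q y \<Longrightarrow> rec_eval rg [y] (g y)" using g unfolding computable_on_def by blast
  have test: "P x \<Longrightarrow> rec_eval (Cn rg [recf_npair]) [n, x] (g (npair n x))" for n x
    by (rule rec_eval_Cn1[OF rec_eval_npair rg[OF Q_g]])
  have "rec_eval (Mn (Cn rg [recf_npair])) [x] (LEAST n. g (npair n x) = 0)" if Px: "P x" for x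
  proof (rule ev_Mn)
    obtain n where "g (npair n x) = 0" using ex[OF Px] by blast
    then have "g (npair (LEAST n. g (npair n x) = 0) x) = 0" by (rule LeastI)
    then show "rec_eval (Cn rg [recf_npair]) [LEAST n. g (npair n x) = 0, x] 0"
      using test[OF Px] by metis
    show "\<forall>m<(LEAST n. g (npair n x) = 0). \<exists>r. rec_eval (Cn rg [recf_npair]) [m, x] r \<and> 0 < r"
      using test[OF Px] not_less_Least by blast
  qed
  then show ?thesis unfolding computable_on_def by blast
qed

lemmas computable_on_intros = computable_on_if computable_on_eq computable_on_less computable_on_le
  computable_on_conj
  computable_on_not computable_on_disj computable_on_add computable_on_diff computable_on_mult
  computable_on_npair computable_on_nfst computable_on_nsnd computable_on_Suc computable_on_id
  computable_on_const

section \<open>Computability of well-founded recursion with two nested calls\<close>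

definition recursion_step :: "(nat \<Rightarrow> bool) \<Rightarrow> (nat \<Rightarrow> nat) \<Rightarrow> (nat \<Rightarrow> nat) \<Rightarrow>
    (nat \<Rightarrow> nat) \<Rightarrow> (nat \<Rightarrow> nat) \<Rightarrow> (nat \<Rightarrow> nat) \<Rightarrow> nat \<Rightarrow> bool" where
  "recursion_step P f \<mu> call1 call2 combine x \<longleftrightarrow>
     (let x1 = call1 x; x2 = call2 (npair x (f x1)) in
      P x1 \<and> \<mu> x1 < \<mu> x \<and> P x2 \<and> \<mu> x2 < \<mu> x \<and> f x = combine (npair x (npair (f x1) (f x2))))"

lemma recursion_step_one_call:
  assumes "P (call1 x)" and "\<mu> (call1 x) < \<mu> x" and "call2 (npair x (f (call1 x))) = call1 x"
    and "\<And>r. f x = combine (npair x (npair (f (call1 x)) r))"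
  shows "recursion_step P f \<mu> call1 call2 combine x"
  using assms unfolding recursion_step_def Let_def by metis

text \<open>A state \<open>npair stack r\<close> of the machine evaluating such a recursion consists of a stack of
  frames and a register \<open>r\<close> holding the value returned last; the empty stack \<open>0\<close> means that
  the machine has halted with result \<open>r\<close>. A frame records an argument, the number of its
  recursive calls that have returned (its phase), and the result of the first call.\<close>

definition push :: "nat \<Rightarrow> nat \<Rightarrow> nat \<Rightarrow> nat \<Rightarrow> nat" where
  "push x phase r1 stack = Suc (npair (npair x (npair phase r1)) stack)"

definition top_frame :: "nat \<Rightarrow> nat" where "top_frame s = nfst (nfst s - 1)"
definition stack_below :: "nat \<Rightarrow> nat" where "stack_below s = nsnd (nfst s - 1)"
definition frame_arg :: "nat \<Rightarrow> nat" where "frame_arg s = nfst (top_frame s)"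
definition frame_phase :: "nat \<Rightarrow> nat" where "frame_phase s = nfst (nsnd (top_frame s))"
definition frame_result1 :: "nat \<Rightarrow> nat" where "frame_result1 s = nsnd (nsnd (top_frame s))"

lemma push_simps [simp]:
  "push x phase r1 stack \<noteq> 0"
  "frame_arg (npair (push x phase r1 stack) r) = x"
  "frame_phase (npair (push x phase r1 stack) r) = phase"
  "frame_result1 (npair (push x phase r1 stack) r) = r1"
  "stack_below (npair (push x phase r1 stack) r) = stack"
  by (simp_all add: push_def frame_arg_def frame_phase_def frame_result1_def stack_below_def
      top_frame_def)

lemma computable_on_frame:
  assumes "computable_on P a"
  shows "computable_on P (\<lambda>x. frame_arg (a x))" "computable_on P (\<lambda>x. frame_phase (a x))"
    "computable_on P (\<lambda>x. frame_result1 (a x))" "computable_on P (\<lambda>x. stack_below (a x))"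
  unfolding frame_arg_def frame_phase_def frame_result1_def stack_below_def top_frame_def
  by (intro computable_on_intros assms)+

lemma computable_on_push:
  "computable_on P a \<Longrightarrow> computable_on P b \<Longrightarrow> computable_on P c \<Longrightarrow> computable_on P d \<Longrightarrow>
    computable_on P (\<lambda>x. push (a x) (b x) (c x) (d x))"
  unfolding push_def by (intro computable_on_intros)

locale recursion_scheme =
  fixes P :: "nat \<Rightarrow> bool" and f \<mu> :: "nat \<Rightarrow> nat" and leaf :: "nat \<Rightarrow> bool"
    and base call1 call2 combine :: "nat \<Rightarrow> nat"
  assumes computable_leaf: "computable_on P (\<lambda>x. of_bool (leaf x))"
    and computable_base: "computable_on (\<lambda>x. P x \<and> leaf x) base"
    and computable_call1: "computable_on (\<lambda>x. P x \<and> \<not> leaf x) call1"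
    and computable_call2:
      "computable_on (\<lambda>y. P (nfst y) \<and> \<not> leaf (nfst y) \<and> nsnd y = f (call1 (nfst y))) call2"
    and computable_combine: "computable_on (\<lambda>y. P (nfst y) \<and> \<not> leaf (nfst y) \<and>
        nfst (nsnd y) = f (call1 (nfst y)) \<and>
        nsnd (nsnd y) = f (call2 (npair (nfst y) (nfst (nsnd y))))) combine"
    and f_leaf: "\<And>x. P x \<Longrightarrow> leaf x \<Longrightarrow> f x = base x"
    and f_node: "\<And>x. P x \<Longrightarrow> \<not> leaf x \<Longrightarrow> recursion_step P f \<mu> call1 call2 combine x"
begin

definition step :: "nat \<Rightarrow> nat" where
  "step s = (let x = frame_arg s; stack = stack_below s; r = nsnd s in
     if nfst s = 0 then s
     else if frame_phase s = 0 then
       (if leaf x then npair stack (base x) else npair (push (call1 x) 0 0 (push x 1 0 stack)) r)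
     else if frame_phase s = 1 then npair (push (call2 (npair x r)) 0 0 (push x 2 r stack)) r
     else npair stack (combine (npair x (npair (frame_result1 s) r))))"

definition good_state :: "nat \<Rightarrow> bool" where
  "good_state s \<longleftrightarrow> nfst s = 0 \<or> (let x = frame_arg s; r1 = frame_result1 s; r = nsnd s in
     (frame_phase s = 0 \<and> P x) \<or>
     (frame_phase s = 1 \<and> P x \<and> \<not> leaf x \<and> r = f (call1 x)) \<or>
     (2 \<le> frame_phase s \<and> P x \<and> \<not> leaf x \<and> r1 = f (call1 x) \<and> r = f (call2 (npair x r1))))"

lemma computable_step: "computable_on good_state step"
  unfolding step_def Let_def
  by (intro computable_on_intros computable_on_frame computable_on_push
      computable_on_comp[OF computable_leaf] computable_on_comp[OF computable_base]
      computable_on_comp[OF computable_call1] computable_on_comp[OF computable_call2]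
      computable_on_comp[OF computable_combine])
    (auto simp: good_state_def Let_def)

definition good_run :: "nat \<Rightarrow> nat \<Rightarrow> nat \<Rightarrow> bool" where
  "good_run k s s' \<longleftrightarrow> (step ^^ k) s = s' \<and> (\<forall>j<k. good_state ((step ^^ j) s))"

lemma good_run_step: "good_state s \<Longrightarrow> good_run 1 s (step s)"
  by (simp add: good_run_def)

lemma good_run_trans: "good_run k s s' \<Longrightarrow> good_run k' s' s'' \<Longrightarrow> good_run (k' + k) s s''"
  unfolding good_run_def
proof (intro conjI allI impI)
  assume run: "(step ^^ k) s = s' \<and> (\<forall>j<k. good_state ((step ^^ j) s))"
    and run': "(step ^^ k') s' = s'' \<and> (\<forall>j<k'. good_state ((step ^^ j) s'))"
  then show "(step ^^ (k' + k)) s = s''" by (simp add: funpow_add)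
  fix j assume "j < k' + k"
  show "good_state ((step ^^ j) s)"
  proof (cases "j < k")
    case False
    then have "(step ^^ j) s = (step ^^ (j - k)) s'"
      using run by (metis funpow_add le_add_diff_inverse2 not_less o_apply)
    then show ?thesis using run' \<open>j < k' + k\<close> False by auto
  qed (use run in blast)
qed

lemma good_run_call: "P x \<Longrightarrow> \<exists>k. good_run k (npair (push x 0 0 stack) r) (npair stack (f x))"
proof (induction "\<mu> x" arbitrary: x stack r rule: less_induct)
  case less
  show ?case
  proof (cases "leaf x")
    case True
    then have "good_run 1 (npair (push x 0 0 stack) r) (npair stack (f x))"
      using good_run_step[of "npair (push x 0 0 stack) r"] less.prems f_leaf
      by (simp add: step_def good_state_def Let_def)
    then show ?thesis ..
  next
    case False
    define x1 where "x1 = call1 x"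
    define x2 where "x2 = call2 (npair x (f x1))"
    have node: "P x1" "\<mu> x1 < \<mu> x" "P x2" "\<mu> x2 < \<mu> x"
      "f x = combine (npair x (npair (f x1) (f x2)))"
      using f_node[OF less.prems False] unfolding recursion_step_def x1_def x2_def Let_def by auto
    define stack1 where "stack1 = push x 1 0 stack"
    define stack2 where "stack2 = push x 2 (f x1) stack"
    have "good_run 1 (npair (push x 0 0 stack) r) (npair (push x1 0 0 stack1) r)"
      using good_run_step[of "npair (push x 0 0 stack) r"] less.prems False
      by (simp add: step_def good_state_def Let_def x1_def stack1_def)
    moreover obtain k1 where "good_run k1 (npair (push x1 0 0 stack1) r) (npair stack1 (f x1))"
      using less.hyps[OF node(2) node(1)] by blast
    moreover have "good_run 1 (npair stack1 (f x1)) (npair (push x2 0 0 stack2) (f x1))"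
      using good_run_step[of "npair stack1 (f x1)"] less.prems False
      by (simp add: step_def good_state_def Let_def x1_def x2_def stack1_def stack2_def)
    moreover obtain k2 where "good_run k2 (npair (push x2 0 0 stack2) (f x1)) (npair stack2 (f x2))"
      using less.hyps[OF node(4) node(3)] by blast
    moreover have "good_run 1 (npair stack2 (f x2)) (npair stack (f x))"
      using good_run_step[of "npair stack2 (f x2)"] less.prems False node(5)
      by (simp add: step_def good_state_def Let_def x1_def x2_def stack2_def)
    ultimately show ?thesis by (meson good_run_trans)
  qed
qed

definition initial :: "nat \<Rightarrow> nat" where "initial x = npair (push x 0 0 0) 0"

definition reachable :: "nat \<Rightarrow> bool" where
  "reachable s \<longleftrightarrow> (\<exists>x n. P x \<and> s = (step ^^ n) (initial x))"

lemma step_halted: "(step ^^ n) (npair 0 r) = npair 0 r"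
  by (induct n) (auto simp: step_def)

lemma run_to_halt: "P x \<Longrightarrow> \<exists>k. good_run k (initial x) (npair 0 (f x))"
  unfolding initial_def by (rule good_run_call)

lemma reachable_good: "reachable s \<Longrightarrow> good_state s"
proof -
  assume "reachable s"
  then obtain x n where "P x" and s: "s = (step ^^ n) (initial x)" unfolding reachable_def by blast
  then obtain k where k: "good_run k (initial x) (npair 0 (f x))" using run_to_halt by blast
  show ?thesis
  proof (cases "n < k")
    case False
    then have "s = (step ^^ (n - k)) ((step ^^ k) (initial x))"
      using s by (metis funpow_add le_add_diff_inverse2 not_less o_apply)
    then show ?thesis using k step_halted by (simp add: good_run_def good_state_def)
  qed (use k s in \<open>simp add: good_run_def\<close>)
qed

lemma reachable_step: "reachable s \<Longrightarrow> reachable (step s)"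
  unfolding reachable_def by (metis funpow_Suc_right o_apply funpow_swap1)

lemma reachable_initial: "P x \<Longrightarrow> reachable (initial x)"
  unfolding reachable_def by (metis funpow_0)

lemma computable_on_initial: "computable_on Q a \<Longrightarrow> computable_on Q (\<lambda>y. initial (a y))"
  unfolding initial_def by (intro computable_on_intros computable_on_push)

lemma computable_step_reachable: "computable_on reachable step"
  using computable_on_subset[OF computable_step reachable_good] .

lemma computable_run: "computable_on (\<lambda>y. P (nsnd y)) (\<lambda>y. (step ^^ nfst y) (initial (nsnd y)))"
proof (rule computable_on_funpow[OF computable_step_reachable reachable_step])
  show "computable_on (\<lambda>y. P (nsnd y)) (\<lambda>y. nfst y)"
    by (intro computable_on_nfst computable_on_id)
  show "computable_on (\<lambda>y. P (nsnd y)) (\<lambda>y. initial (nsnd y))"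
    by (intro computable_on_initial computable_on_nsnd computable_on_id)
qed (simp_all add: reachable_initial)

definition halting_time :: "nat \<Rightarrow> nat" where
  "halting_time x = (LEAST n. nfst ((step ^^ n) (initial x)) = 0)"

lemma halts: "P x \<Longrightarrow> \<exists>k. (step ^^ k) (initial x) = npair 0 (f x)"
  using run_to_halt unfolding good_run_def by blast

lemma computable_halting_time: "computable_on P halting_time"
proof -
  have "computable_on P
      (\<lambda>x. LEAST n. nfst ((step ^^ nfst (npair n x)) (initial (nsnd (npair n x)))) = 0)"
  proof (rule computable_on_Least[OF computable_on_nfst[OF computable_run]])
    fix x assume "P x"
    then obtain k where "(step ^^ k) (initial x) = npair 0 (f x)" using halts by blast
    then show "\<exists>n. nfst ((step ^^ nfst (npair n x)) (initial (nsnd (npair n x)))) = 0"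
      by (intro exI[of _ k]) simp
  qed simp
  then show ?thesis by (simp add: halting_time_def[abs_def])
qed

lemma result_at_halting_time: "P x \<Longrightarrow> nsnd ((step ^^ halting_time x) (initial x)) = f x"
proof -
  assume "P x"
  then obtain k where k: "(step ^^ k) (initial x) = npair 0 (f x)" using halts by blast
  have halted: "nfst ((step ^^ halting_time x) (initial x)) = 0"
    unfolding halting_time_def by (rule LeastI[of _ k]) (simp add: k)
  have "halting_time x \<le> k" unfolding halting_time_def by (rule Least_le) (simp add: k)
  then have "npair 0 (f x) = (step ^^ (k - halting_time x)) ((step ^^ halting_time x) (initial x))"
    using k by (metis funpow_add le_add_diff_inverse2 o_apply)
  also have "(step ^^ halting_time x) (initial x) =
      npair 0 (nsnd ((step ^^ halting_time x) (initial x)))"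
    using halted by (metis npair_nfst_nsnd)
  finally show ?thesis using step_halted by simp
qed

theorem computable: "computable_on P f"
proof (rule computable_on_cong)
  show "computable_on P (\<lambda>x. nsnd ((step ^^ halting_time x) (initial x)))"
    by (intro computable_on_nsnd computable_on_funpow[OF computable_step_reachable reachable_step]
        computable_halting_time computable_on_initial computable_on_id reachable_initial)
qed (rule result_at_halting_time)

end

section \<open>Algorithmic subtyping and type synthesis\<close>

lemma is_TVarB_iff: "is_TVarB B \<longleftrightarrow> (\<exists>U. B = TVarB U)"
  by (cases B) auto

lemma is_VarB_iff: "is_VarB B \<longleftrightarrow> (\<exists>U. B = VarB U)"
  by (cases B) auto

lemma liftT_0 [simp]: "liftT 0 k T = T"
  by (induct T arbitrary: k) auto

lemma liftT_liftT: "k' \<le> k \<Longrightarrow> k \<le> k' + n' \<Longrightarrow> liftT n k (liftT n' k' U) = liftT (n + n') k' U"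
  by (induct U arbitrary: k k') auto

lemma substT_liftT: "k \<le> j \<Longrightarrow> j < k + n \<Longrightarrow> substT (liftT n k U) j S = liftT (n - 1) k U"
  by (induct U arbitrary: k j) auto

lemma substT_liftT_same [simp]: "substT (liftT 1 k U) k S = U" "substT (liftT (Suc 0) k U) k S = U"
  using substT_liftT[of k k 1 U S] by simp_all

lemma map_is_TVarB_length: "map is_TVarB \<Gamma> = map is_TVarB \<Gamma>' \<Longrightarrow> length \<Gamma> = length \<Gamma>'"
  by (drule arg_cong[where f=length]) simp

lemma map_is_TVarB_nth:
  "map is_TVarB \<Gamma> = map is_TVarB \<Gamma>' \<Longrightarrow> i < length \<Gamma> \<Longrightarrow> is_TVarB (\<Gamma> ! i) = is_TVarB (\<Gamma>' ! i)"
proof -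
  assume a: "map is_TVarB \<Gamma> = map is_TVarB \<Gamma>'" and i: "i < length \<Gamma>"
  have "map is_TVarB \<Gamma> ! i = map is_TVarB \<Gamma>' ! i" using a by simp
  then show ?thesis using i map_is_TVarB_length[OF a] by simp
qed

lemma wfT_cong: "map is_TVarB \<Gamma> = map is_TVarB \<Gamma>' \<Longrightarrow> wfT \<Gamma> T = wfT \<Gamma>' T"
proof (induct T arbitrary: \<Gamma> \<Gamma>')
  case (TVar i)
  have l: "length \<Gamma> = length \<Gamma>'" by (rule map_is_TVarB_length[OF TVar])
  show ?case
  proof (cases "i < length \<Gamma>")
    case True then show ?thesis using l map_is_TVarB_nth[OF TVar True]
      by (simp only: wfT.simps; simp)
  next
    case False then show ?thesis using l by (simp only: wfT.simps; simp)
  qed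
next
  case (Arr S T)
  show ?case using Arr(1)[of \<Gamma> \<Gamma>', OF Arr(3)] Arr(2)[of \<Gamma> \<Gamma>', OF Arr(3)] by (simp only: wfT.simps)
next
  case (All S T)
  have "map is_TVarB (TVarB S # \<Gamma>) = map is_TVarB (TVarB S # \<Gamma>')" using All(3) by simp
  then show ?case using All(1)[of \<Gamma> \<Gamma>', OF All(3)] All(2)[of "TVarB S # \<Gamma>" "TVarB S # \<Gamma>'"]
    by (simp only: wfT.simps)
qed auto

lemma wfT_liftT: "wfT (G1 @ G2) T \<Longrightarrow> map is_TVarB G1' = map is_TVarB G1 \<Longrightarrow>
    wfT (G1' @ G3 @ G2) (liftT (length G3) (length G1) T)"
proof (induct T arbitrary: G1 G1')
  case (TVar i)
  have l: "length G1' = length G1" using map_is_TVarB_length[OF TVar(2)] .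
  show ?case
  proof (cases "i < length G1")
    case True
    have "is_TVarB (G1 ! i)" using TVar(1) True by (simp add: nth_append)
    moreover have "is_TVarB (G1' ! i) = is_TVarB (G1 ! i)"
      using map_is_TVarB_nth[OF TVar(2)] True l by simp
    ultimately show ?thesis using True l by (simp add: nth_append)
  next
    case False
    have "i - length G1 < length G2 \<and> is_TVarB (G2 ! (i - length G1))" using TVar(1) False
      by (auto simp: nth_append)
    then show ?thesis using False l by (auto simp: nth_append)
  qed
next
  case (Arr S T)
  have "wfT (G1 @ G2) S" "wfT (G1 @ G2) T" using Arr(3) by simp_all
  then show ?case using Arr(1)[OF _ Arr(4)] Arr(2)[OF _ Arr(4)] by simp
next
  case (All S T)
  have 1: "wfT (G1 @ G2) S" "wfT ((TVarB S # G1) @ G2) T" using All(3) by simp_all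
  have 2: "map is_TVarB (TVarB (liftT (length G3) (length G1) S) # G1') =
      map is_TVarB (TVarB S # G1)"
    using All(4) by simp
  show ?case using All(1)[OF 1(1) All(4)] All(2)[OF 1(2) 2] by simp
qed simp

lemma wfT_liftT0: "wfT G2 T \<Longrightarrow> wfT (G3 @ G2) (liftT (length G3) 0 T)"
  using wfT_liftT[of "[]" G2 T "[]" G3] by simp

lemma wfT_substT: "wfT (G1 @ B # G2) T \<Longrightarrow> wfT G2 U \<Longrightarrow> map is_TVarB G1' = map is_TVarB G1 \<Longrightarrow>
    wfT (G1' @ G2) (substT T (length G1) U)"
proof (induct T arbitrary: G1 G1')
  case (TVar i)
  have l: "length G1' = length G1" using map_is_TVarB_length[OF TVar(3)] .
  consider "i < length G1" | "i = length G1" | "i > length G1" by linarith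
  then show ?case
  proof cases
    case 1 then show ?thesis using TVar l map_is_TVarB_nth[OF TVar(3), of i]
      by (simp add: nth_append)
  next
    case 2 then show ?thesis using TVar l wfT_liftT0[of G2 U G1'] by simp
  next
    case 3
    then obtain j where j: "i = Suc (length G1 + j)" by (metis less_iff_Suc_add)
    then show ?thesis using TVar l by (simp add: nth_append)
  qed
next
  case (All S T)
  then show ?case using All(2)[of "TVarB S # G1" "TVarB (substT S (length G1) U) # G1'"] by simp
qed auto

lemma wfE_nth: "wfE \<Gamma> \<Longrightarrow> i < length \<Gamma> \<Longrightarrow> wfT (drop (Suc i) \<Gamma>) (bty (\<Gamma> ! i))"
proof (induct \<Gamma> arbitrary: i)
  case (Cons B \<Gamma>)
  then show ?case by (cases i) auto
qed simp

lemma wfT_lookup: "wfE \<Gamma> \<Longrightarrow> i < length \<Gamma> \<Longrightarrow> wfT \<Gamma> (liftT (Suc i) 0 (bty (\<Gamma> ! i)))"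
  using wfT_liftT0[OF wfE_nth, of \<Gamma> i "take (Suc i) \<Gamma>"] by simp

lemma liftT_substT_Top:
  "wfT \<Gamma> T \<Longrightarrow> k < length \<Gamma> \<Longrightarrow> \<not> is_TVarB (\<Gamma> ! k) \<Longrightarrow> liftT 1 k (substT T k Top) = T"
proof (induct T arbitrary: \<Gamma> k)
  case (TVar i)
  then have "i \<noteq> k" by auto
  then show ?case by auto
next
  case (All S T)
  show ?case using All(1)[of \<Gamma> k] All(2)[of "TVarB S # \<Gamma>" "Suc k"] All(3-5) by simp
qed auto

inductive alg_sub :: "env \<Rightarrow> ty \<Rightarrow> ty \<Rightarrow> bool" where
  AS_Top: "alg_sub \<Gamma> S Top"
| AS_Refl: "alg_sub \<Gamma> (TVar i) (TVar i)"
| AS_Var: "i < length \<Gamma> \<Longrightarrow> \<Gamma> ! i = TVarB U \<Longrightarrow> alg_sub \<Gamma> (liftT (Suc i) 0 U) T \<Longrightarrow> alg_sub \<Gamma> (TVar i) T"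
| AS_Arr: "alg_sub \<Gamma> T1 S1 \<Longrightarrow> alg_sub \<Gamma> S2 T2 \<Longrightarrow> alg_sub \<Gamma> (Arr S1 S2) (Arr T1 T2)"
| AS_All: "alg_sub \<Gamma> T0 S0 \<Longrightarrow> alg_sub (TVarB Top # \<Gamma>) S1 T1 \<Longrightarrow> alg_sub \<Gamma> (All S0 S1) (All T0 T1)"

lemma alg_sub_refl: "alg_sub \<Gamma> T T"
  by (induct T arbitrary: \<Gamma>) (auto intro: AS_Top AS_Refl AS_Arr AS_All)

lemma alg_sub_TopE: "alg_sub \<Gamma> Top T \<Longrightarrow> T = Top"
  by (cases rule: alg_sub.cases) auto

lemma alg_sub_ArrE:
  "alg_sub \<Gamma> (Arr S1 S2) T \<Longrightarrow> T = Top \<or> (\<exists>T1 T2. T = Arr T1 T2 \<and> alg_sub \<Gamma> T1 S1 \<and> alg_sub \<Gamma> S2 T2)"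
  by (cases rule: alg_sub.cases) auto

lemma alg_sub_AllE:
  "alg_sub \<Gamma> (All S0 S1) T \<Longrightarrow>
    T = Top \<or> (\<exists>T0 T1. T = All T0 T1 \<and> alg_sub \<Gamma> T0 S0 \<and> alg_sub (TVarB Top # \<Gamma>) S1 T1)"
  by (cases rule: alg_sub.cases) auto

lemma alg_sub_TVarE: "alg_sub \<Gamma> (TVar i) T \<Longrightarrow> T = Top \<or> T = TVar i \<or>
    (\<exists>U. i < length \<Gamma> \<and> \<Gamma> ! i = TVarB U \<and> alg_sub \<Gamma> (liftT (Suc i) 0 U) T)"
  by (cases rule: alg_sub.cases) auto

lemma alg_sub_TVar_iff: "i < length \<Gamma> \<Longrightarrow> \<Gamma> ! i = TVarB U \<Longrightarrow> T \<noteq> Top \<Longrightarrow> T \<noteq> TVar i \<Longrightarrow>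
    alg_sub \<Gamma> (TVar i) T \<longleftrightarrow> alg_sub \<Gamma> (liftT (Suc i) 0 U) T"
  using alg_sub_TVarE[of \<Gamma> i T] alg_sub.AS_Var[of i \<Gamma> U T] by auto

lemma alg_sub_Arr_iff: "alg_sub \<Gamma> (Arr S1 S2) (Arr T1 T2) \<longleftrightarrow> alg_sub \<Gamma> T1 S1 \<and> alg_sub \<Gamma> S2 T2"
  using alg_sub_ArrE[of \<Gamma> S1 S2 "Arr T1 T2"] alg_sub.AS_Arr[of \<Gamma> T1 S1 S2 T2] by auto

lemma alg_sub_All_iff:
  "alg_sub \<Gamma> (All S1 S2) (All T1 T2) \<longleftrightarrow> alg_sub \<Gamma> T1 S1 \<and> alg_sub (TVarB Top # \<Gamma>) S2 T2"
  using alg_sub_AllE[of \<Gamma> S1 S2 "All T1 T2"] alg_sub.AS_All[of \<Gamma> T1 S1 S2 T2] by auto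

lemma alg_sub_mismatch:
  "\<not> alg_sub \<Gamma> Top (TVar i)" "\<not> alg_sub \<Gamma> Top (Arr A B)" "\<not> alg_sub \<Gamma> Top (All A B)"
  "\<not> alg_sub \<Gamma> (Arr S1 S2) (TVar i)" "\<not> alg_sub \<Gamma> (Arr S1 S2) (All A B)"
  "\<not> alg_sub \<Gamma> (All S1 S2) (TVar i)" "\<not> alg_sub \<Gamma> (All S1 S2) (Arr A B)"
  using alg_sub_TopE alg_sub_ArrE alg_sub_AllE by blast+

lemma alg_sub_trans_through:
  assumes IH: "\<And>Q' \<Gamma> S T. size Q' < size Q \<Longrightarrow> alg_sub \<Gamma> S Q' \<Longrightarrow> alg_sub \<Gamma> Q' T \<Longrightarrow> alg_sub \<Gamma> S T"
  shows "alg_sub \<Gamma> S Q0 \<Longrightarrow> Q0 = Q \<Longrightarrow> alg_sub \<Gamma> Q T \<Longrightarrow> alg_sub \<Gamma> S T"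
proof (induction arbitrary: T rule: alg_sub.induct)
  case (AS_Top \<Gamma> S)
  have "alg_sub \<Gamma> Top T" using AS_Top.prems by simp
  then have "T = Top" by (rule alg_sub_TopE)
  then show ?case by (simp add: alg_sub.AS_Top)
next
  case (AS_Refl \<Gamma> i)
  then show ?case by simp
next
  case (AS_Var i \<Gamma> U T')
  show ?case by (rule alg_sub.AS_Var[OF AS_Var.hyps(1,2) AS_Var.IH[OF AS_Var.prems]])
next
  case (AS_Arr \<Gamma> T1 S1 S2 T2)
  have q: "Q = Arr T1 T2" using AS_Arr.prems(1) by simp
  have "alg_sub \<Gamma> (Arr T1 T2) T" using AS_Arr.prems(2) q by simp
  from alg_sub_ArrE[OF this] show ?case
  proof (elim disjE exE conjE)
    assume "T = Top" then show ?thesis by (simp add: alg_sub.AS_Top)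
  next
    fix T1' T2' assume T: "T = Arr T1' T2'" "alg_sub \<Gamma> T1' T1" "alg_sub \<Gamma> T2 T2'"
    have "alg_sub \<Gamma> T1' S1" by (rule IH[OF _ T(2) AS_Arr.hyps(1)]) (simp add: q)
    moreover have "alg_sub \<Gamma> S2 T2'" by (rule IH[OF _ AS_Arr.hyps(2) T(3)]) (simp add: q)
    ultimately show ?thesis using T(1) by (simp add: alg_sub.AS_Arr)
  qed
next
  case (AS_All \<Gamma> T0 S0 S1 T1)
  have q: "Q = All T0 T1" using AS_All.prems(1) by simp
  have "alg_sub \<Gamma> (All T0 T1) T" using AS_All.prems(2) q by simp
  from alg_sub_AllE[OF this] show ?case
  proof (elim disjE exE conjE)
    assume "T = Top" then show ?thesis by (simp add: alg_sub.AS_Top)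
  next
    fix T0' T1' assume T: "T = All T0' T1'" "alg_sub \<Gamma> T0' T0" "alg_sub (TVarB Top # \<Gamma>) T1 T1'"
    have "alg_sub \<Gamma> T0' S0" by (rule IH[OF _ T(2) AS_All.hyps(1)]) (simp add: q)
    moreover have "alg_sub (TVarB Top # \<Gamma>) S1 T1'"
      by (rule IH[OF _ AS_All.hyps(2) T(3)]) (simp add: q)
    ultimately show ?thesis using T(1) by (simp add: alg_sub.AS_All)
  qed
qed

lemma alg_sub_trans: "alg_sub \<Gamma> S Q \<Longrightarrow> alg_sub \<Gamma> Q T \<Longrightarrow> alg_sub \<Gamma> S T"
proof (induction "size Q" arbitrary: \<Gamma> S Q T rule: less_induct)
  case less
  show ?case by (rule alg_sub_trans_through[OF less.hyps less.prems(1) refl less.prems(2)]) auto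
qed

lemma alg_sub_weaken:
  "alg_sub G A B \<Longrightarrow> G = replicate m (TVarB Top) @ \<Gamma> \<Longrightarrow>
     alg_sub (replicate m (TVarB Top) @ X # \<Gamma>) (liftT 1 m A) (liftT 1 m B)"
proof (induction arbitrary: m rule: alg_sub.induct)
  case (AS_Var i G U T)
  have IH: "alg_sub (replicate m (TVarB Top) @ X # \<Gamma>) (liftT 1 m (liftT (Suc i) 0 U)) (liftT 1 m T)"
    by (rule AS_Var.IH[OF AS_Var.prems])
  have G: "G = replicate m (TVarB Top) @ \<Gamma>" by (rule AS_Var.prems)
  show ?case
  proof (cases "i < m")
    case True
    then have U: "U = Top" using AS_Var.hyps(2) G by (simp add: nth_append)
    have len: "i < length (replicate m (TVarB Top) @ X # \<Gamma>)" using True by simp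
    have nth: "(replicate m (TVarB Top) @ X # \<Gamma>) ! i = TVarB Top" using True
      by (simp add: nth_append)
    have body: "alg_sub (replicate m (TVarB Top) @ X # \<Gamma>) (liftT (Suc i) 0 Top) (liftT 1 m T)"
      using IH U by simp
    show ?thesis using alg_sub.AS_Var[OF len nth body] True by simp
  next
    case False
    have e: "liftT 1 m (liftT (Suc i) 0 U) = liftT (Suc (Suc i)) 0 U" using False
      by (simp add: liftT_liftT)
    have len: "Suc i < length (replicate m (TVarB Top) @ X # \<Gamma>)" using AS_Var.hyps(1) G by simp
    have nth: "(replicate m (TVarB Top) @ X # \<Gamma>) ! Suc i = TVarB U"
      using AS_Var.hyps(2) G False by (simp add: nth_append Suc_diff_le)
    show ?thesis using alg_sub.AS_Var[OF len nth] IH e False by simp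
  qed
next
  case (AS_All G T0 S0 S1 T1)
  have 1: "alg_sub (replicate m (TVarB Top) @ X # \<Gamma>) (liftT 1 m T0) (liftT 1 m S0)"
    by (rule AS_All.IH(1)[OF AS_All.prems])
  have 2: "alg_sub (TVarB Top # replicate m (TVarB Top) @ X # \<Gamma>)
      (liftT 1 (Suc m) S1) (liftT 1 (Suc m) T1)"
    using AS_All.IH(2)[of "Suc m"] AS_All.prems by simp
  show ?case using alg_sub.AS_All[OF 1 2] by simp
qed (auto intro: alg_sub.intros alg_sub_refl)

lemma alg_sub_subst_Top:
  "alg_sub G A B \<Longrightarrow> G = replicate m (TVarB Top) @ TVarB Top # \<Gamma> \<Longrightarrow>
     alg_sub (replicate m (TVarB Top) @ \<Gamma>) (substT A m S) (substT B m S)"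
proof (induction arbitrary: m rule: alg_sub.induct)
  case (AS_Var i G U T)
  have IH: "alg_sub (replicate m (TVarB Top) @ \<Gamma>) (substT (liftT (Suc i) 0 U) m S) (substT T m S)"
    by (rule AS_Var.IH[OF AS_Var.prems])
  have G: "G = replicate m (TVarB Top) @ TVarB Top # \<Gamma>" by (rule AS_Var.prems)
  consider "i < m" | "i = m" | "i > m" by linarith
  then show ?case
  proof cases
    case 1
    then have U: "U = Top" using AS_Var.hyps(2) G by (simp add: nth_append)
    have len: "i < length (replicate m (TVarB Top) @ \<Gamma>)" using 1 by simp
    have nth: "(replicate m (TVarB Top) @ \<Gamma>) ! i = TVarB Top" using 1 by (simp add: nth_append)
    have body: "alg_sub (replicate m (TVarB Top) @ \<Gamma>) (liftT (Suc i) 0 Top) (substT T m S)"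
      using IH U by simp
    show ?thesis using alg_sub.AS_Var[OF len nth body] 1 by simp
  next
    case 2
    then have U: "U = Top" using AS_Var.hyps(2) G by (simp add: nth_append)
    then have "substT T m S = Top" using IH alg_sub_TopE by simp
    then show ?thesis by (simp add: alg_sub.AS_Top)
  next
    case 3
    have e: "substT (liftT (Suc i) 0 U) m S = liftT (Suc (i - 1)) 0 U"
      using 3 substT_liftT[of 0 m "Suc i" U S] by simp
    have len: "i - 1 < length (replicate m (TVarB Top) @ \<Gamma>)" using AS_Var.hyps(1) G 3 by simp
    have nth: "(replicate m (TVarB Top) @ \<Gamma>) ! (i - 1) = TVarB U"
      using AS_Var.hyps(2) G 3 by (auto simp: nth_append nth_Cons')
    show ?thesis using alg_sub.AS_Var[OF len nth] IH e 3 by simp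
  qed
next
  case (AS_All G T0 S0 S1 T1)
  have 1: "alg_sub (replicate m (TVarB Top) @ \<Gamma>) (substT T0 m S) (substT S0 m S)"
    by (rule AS_All.IH(1)[OF AS_All.prems])
  have 2: "alg_sub (TVarB Top # replicate m (TVarB Top) @ \<Gamma>)
      (substT S1 (Suc m) S) (substT T1 (Suc m) S)"
    using AS_All.IH(2)[of "Suc m"] AS_All.prems by simp
  show ?case using alg_sub.AS_All[OF 1 2] by simp
qed (auto intro: alg_sub.intros alg_sub_refl)

lemma alg_sub_narrow:
  "alg_sub G A B \<Longrightarrow> G = G1 @ TVarB Top # G2 \<Longrightarrow> alg_sub (G1 @ TVarB S # G2) A B"
proof (induction arbitrary: G1 rule: alg_sub.induct)
  case (AS_Var i G U T)
  have IH: "alg_sub (G1 @ TVarB S # G2) (liftT (Suc i) 0 U) T" by (rule AS_Var.IH[OF AS_Var.prems])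
  have G: "G = G1 @ TVarB Top # G2" by (rule AS_Var.prems)
  show ?case
  proof (cases "i = length G1")
    case True
    then have "U = Top" using AS_Var.hyps(2) G by simp
    then have "T = Top" using IH alg_sub_TopE by simp
    then show ?thesis by (simp add: alg_sub.AS_Top)
  next
    case False
    have len: "i < length (G1 @ TVarB S # G2)" using AS_Var.hyps(1) G by simp
    have nth: "(G1 @ TVarB S # G2) ! i = TVarB U" using AS_Var.hyps(2) G False
      by (auto simp: nth_append nth_Cons')
    show ?thesis by (rule alg_sub.AS_Var[OF len nth IH])
  qed
next
  case (AS_All G T0 S0 S1 T1)
  have 1: "alg_sub (G1 @ TVarB S # G2) T0 S0" by (rule AS_All.IH(1)[OF AS_All.prems])
  have 2: "alg_sub (TVarB Top # G1 @ TVarB S # G2) S1 T1"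
    using AS_All.IH(2)[of "TVarB Top # G1"] AS_All.prems by simp
  show ?case by (rule alg_sub.AS_All[OF 1 2])
qed (auto intro: alg_sub.intros alg_sub_refl)

lemma subtype_wf: "\<Gamma> \<turnstile>\<^sub>s S <: T \<Longrightarrow> wfE \<Gamma> \<and> wfT \<Gamma> S \<and> wfT \<Gamma> T"
proof (induction rule: subtype.induct)
  case (SA_Var \<Gamma> i U)
  then show ?case using wfT_lookup[of \<Gamma> i] by simp
next
  case (SA_All_Top \<Gamma> T0 S0 S1 T1)
  then show ?case
    using wfT_cong[of "TVarB Top # \<Gamma>" "TVarB S0 # \<Gamma>"] wfT_cong[of "TVarB Top # \<Gamma>" "TVarB T0 # \<Gamma>"]
    by simp
qed auto

lemma alg_sub_sound: "alg_sub \<Gamma> S T \<Longrightarrow> wfE \<Gamma> \<Longrightarrow> wfT \<Gamma> S \<Longrightarrow> wfT \<Gamma> T \<Longrightarrow> \<Gamma> \<turnstile>\<^sub>s S <: T"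
proof (induction rule: alg_sub.induct)
  case (AS_Var i \<Gamma> U T)
  have "wfT \<Gamma> (liftT (Suc i) 0 U)"
    using wfT_lookup[OF AS_Var.prems(1) AS_Var.hyps(1)] AS_Var.hyps(2) by simp
  then show ?case using AS_Var by (blast intro: SA_Var SA_Trans)
next
  case (AS_All \<Gamma> T0 S0 S1 T1)
  then show ?case
    using wfT_cong[of "TVarB Top # \<Gamma>" "TVarB S0 # \<Gamma>"] wfT_cong[of "TVarB Top # \<Gamma>" "TVarB T0 # \<Gamma>"]
    by (auto intro!: SA_All_Top)
qed (auto intro: SA_Top SA_Refl SA_Arr)

lemma alg_sub_complete: "\<Gamma> \<turnstile>\<^sub>s S <: T \<Longrightarrow> alg_sub \<Gamma> S T"
proof (induction rule: subtype.induct)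
  case (SA_Trans \<Gamma> S T U)
  from SA_Trans.IH show ?case by (rule alg_sub_trans)
qed (auto intro: AS_Top AS_Refl AS_Arr AS_All AS_Var[OF _ _ alg_sub_refl] alg_sub_refl)

lemma typing_wf: "\<Gamma> \<turnstile>\<^sub>t t : T \<Longrightarrow> wfE \<Gamma> \<and> wfT \<Gamma> T"
proof (induction rule: typing.induct)
  case (T_Var \<Gamma> i U)
  then show ?case using wfT_lookup[of \<Gamma> i] by simp
next
  case (T_Sub \<Gamma> t T T')
  then show ?case using subtype_wf by blast
next
  case (T_Abs S \<Gamma> t T)
  then show ?case using wfT_substT[of "[]" "VarB S" \<Gamma> T Top "[]"] by simp
next
  case (T_TApp \<Gamma> t S T S')
  then show ?case using wfT_substT[of "[]" "TVarB S" \<Gamma> T S' "[]"] subtype_wf by auto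
qed auto

lemma typing_TopT_inv: "\<Gamma> \<turnstile>\<^sub>t t : R \<Longrightarrow> t = TopT \<Longrightarrow> alg_sub \<Gamma> Top R"
proof (induction rule: typing.induct)
  case (T_Sub \<Gamma> t T T')
  then show ?case using alg_sub_complete[OF T_Sub.hyps(2)] alg_sub_trans by blast
qed (auto intro: alg_sub_refl)

lemma typing_Var_inv:
  "\<Gamma> \<turnstile>\<^sub>t t : R \<Longrightarrow> t = Var i \<Longrightarrow> \<exists>U. i < length \<Gamma> \<and> \<Gamma> ! i = VarB U \<and> alg_sub \<Gamma> (liftT (Suc i) 0 U) R"
proof (induction rule: typing.induct)
  case (T_Sub \<Gamma> t T T')
  then show ?case using alg_sub_complete[OF T_Sub.hyps(2)] alg_sub_trans by blast
qed (auto intro: alg_sub_refl)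

lemma typing_Abs_inv:
  "\<Gamma> \<turnstile>\<^sub>t t : R \<Longrightarrow> t = Abs S u \<Longrightarrow> \<exists>T0. VarB S # \<Gamma> \<turnstile>\<^sub>t u : T0 \<and> alg_sub \<Gamma> (Arr S (substT T0 0 Top)) R"
proof (induction rule: typing.induct)
  case (T_Sub \<Gamma> t T T')
  then show ?case using alg_sub_complete[OF T_Sub.hyps(2)] alg_sub_trans by blast
qed (auto intro: alg_sub_refl)

lemma typing_TAbs_inv:
  "\<Gamma> \<turnstile>\<^sub>t t : R \<Longrightarrow> t = TAbs S u \<Longrightarrow> \<exists>T0. TVarB S # \<Gamma> \<turnstile>\<^sub>t u : T0 \<and> alg_sub \<Gamma> (All S T0) R"
proof (induction rule: typing.induct)
  case (T_Sub \<Gamma> t T T')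
  then show ?case using alg_sub_complete[OF T_Sub.hyps(2)] alg_sub_trans by blast
qed (auto intro: alg_sub_refl)

lemma typing_App_inv:
  "\<Gamma> \<turnstile>\<^sub>t t : R \<Longrightarrow> t = App s u \<Longrightarrow> \<exists>S T. \<Gamma> \<turnstile>\<^sub>t s : Arr S T \<and> \<Gamma> \<turnstile>\<^sub>t u : S \<and> alg_sub \<Gamma> T R"
proof (induction rule: typing.induct)
  case (T_Sub \<Gamma> t T T')
  then show ?case using alg_sub_complete[OF T_Sub.hyps(2)] alg_sub_trans by blast
qed (auto intro: alg_sub_refl)

lemma typing_TApp_inv: "\<Gamma> \<turnstile>\<^sub>t t : R \<Longrightarrow> t = TApp s S' \<Longrightarrow>
    \<exists>S T. \<Gamma> \<turnstile>\<^sub>t s : All S T \<and> \<Gamma> \<turnstile>\<^sub>s S' <: S \<and> alg_sub \<Gamma> (substT T 0 S') R"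
proof (induction rule: typing.induct)
  case (T_Sub \<Gamma> t T T')
  then show ?case using alg_sub_complete[OF T_Sub.hyps(2)] alg_sub_trans by blast
qed (auto intro: alg_sub_refl)

lemma liftT_TVar_measure: "i < n \<Longrightarrow> (case liftT (Suc i) 0 U of TVar j \<Rightarrow> n - j | _ \<Rightarrow> 0) < n - i"
  by (cases U) auto

function expose :: "env \<Rightarrow> ty \<Rightarrow> ty" where
  "expose \<Gamma> (TVar i) =
    (if i < length \<Gamma> \<and> is_TVarB (\<Gamma> ! i) then expose \<Gamma> (liftT (Suc i) 0 (bty (\<Gamma> ! i))) else TVar i)"
| "expose \<Gamma> Top = Top"
| "expose \<Gamma> (Arr S T) = Arr S T"
| "expose \<Gamma> (All S T) = All S T"
  by pat_completeness auto
termination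
  by (relation "measure (\<lambda>(\<Gamma>, T). case T of TVar i \<Rightarrow> length \<Gamma> - i | _ \<Rightarrow> 0)")
    (auto intro: liftT_TVar_measure)

lemma alg_sub_expose: "alg_sub \<Gamma> M (expose \<Gamma> M)"
proof (induction \<Gamma> M rule: expose.induct)
  case (1 \<Gamma> i)
  show ?case
  proof (cases "i < length \<Gamma> \<and> is_TVarB (\<Gamma> ! i)")
    case True
    then obtain U where U: "\<Gamma> ! i = TVarB U" using is_TVarB_iff by blast
    have "alg_sub \<Gamma> (liftT (Suc i) 0 U) (expose \<Gamma> (TVar i))" using 1 True U by simp
    then show ?thesis using alg_sub.AS_Var[OF _ U] True by blast
  next
    case False
    then have "expose \<Gamma> (TVar i) = TVar i" by auto
    then show ?thesis by (simp add: alg_sub.AS_Refl)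
  qed
qed (simp_all add: alg_sub_refl)

lemma wfT_expose: "wfE \<Gamma> \<Longrightarrow> wfT \<Gamma> M \<Longrightarrow> wfT \<Gamma> (expose \<Gamma> M)"
proof (induction \<Gamma> M rule: expose.induct)
  case (1 \<Gamma> i)
  then show ?case using wfT_lookup[of \<Gamma> i] by auto
qed simp_all

lemma alg_sub_Arr_expose:
  "alg_sub \<Gamma> M (Arr S T) \<Longrightarrow> \<exists>S1 T1. expose \<Gamma> M = Arr S1 T1 \<and> alg_sub \<Gamma> S S1 \<and> alg_sub \<Gamma> T1 T"
proof (induction \<Gamma> M rule: expose.induct)
  case (1 \<Gamma> i)
  from alg_sub_TVarE[OF 1(2)] obtain U where U: "i < length \<Gamma>" "\<Gamma> ! i =
      TVarB U" "alg_sub \<Gamma> (liftT (Suc i) 0 U) (Arr S T)"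
    by auto
  then show ?case using 1(1) by simp
next
  case (2 \<Gamma>) then show ?case using alg_sub_TopE by blast
next
  case (3 \<Gamma> S1 T1) then show ?case using alg_sub_ArrE by fastforce
next
  case (4 \<Gamma> S1 T1) then show ?case using alg_sub_AllE by fastforce
qed

lemma alg_sub_All_expose:
  "alg_sub \<Gamma> M (All S T) \<Longrightarrow>
    \<exists>S1 T1. expose \<Gamma> M = All S1 T1 \<and> alg_sub \<Gamma> S S1 \<and> alg_sub (TVarB Top # \<Gamma>) T1 T"
proof (induction \<Gamma> M rule: expose.induct)
  case (1 \<Gamma> i)
  from alg_sub_TVarE[OF 1(2)] obtain U where U: "i < length \<Gamma>" "\<Gamma> ! i =
      TVarB U" "alg_sub \<Gamma> (liftT (Suc i) 0 U) (All S T)"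
    by auto
  then show ?case using 1(1) by simp
next
  case (2 \<Gamma>) then show ?case using alg_sub_TopE by blast
next
  case (3 \<Gamma> S1 T1) then show ?case using alg_sub_ArrE by fastforce
next
  case (4 \<Gamma> S1 T1) then show ?case using alg_sub_AllE by fastforce
qed

fun is_abs :: "trm \<Rightarrow> bool" where
  "is_abs (Abs S t) = True"
| "is_abs (TAbs S t) = True"
| "is_abs _ = False"

lemma typing_TAbs_not_Arr: "\<not> \<Gamma> \<turnstile>\<^sub>t TAbs S u : Arr A B"
  using typing_TAbs_inv[of \<Gamma> "TAbs S u" "Arr A B" S u] alg_sub_AllE by blast

lemma typing_Abs_not_All: "\<not> \<Gamma> \<turnstile>\<^sub>t Abs S u : All A B"
  using typing_Abs_inv[of \<Gamma> "Abs S u" "All A B" S u] alg_sub_ArrE by blast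

lemma subtype_expose: "wfE \<Gamma> \<Longrightarrow> wfT \<Gamma> M \<Longrightarrow> \<Gamma> \<turnstile>\<^sub>s M <: expose \<Gamma> M"
  using alg_sub_sound[OF alg_sub_expose] wfT_expose by blast

text \<open>The argument of an application is checked against the declarative judgement; computing
  \<open>synth\<close> therefore needs checking as well, and the two are computed together below.\<close>

primrec synth :: "env \<Rightarrow> trm \<Rightarrow> ty option" where
  "synth \<Gamma> TopT = Some Top"
| "synth \<Gamma> (Var i) =
    (if i < length \<Gamma> \<and> is_VarB (\<Gamma> ! i) then Some (liftT (Suc i) 0 (bty (\<Gamma> ! i))) else None)"
| "synth \<Gamma> (Abs S t) = None"
| "synth \<Gamma> (TAbs S t) = None"
| "synth \<Gamma> (App s t) = (case synth \<Gamma> s of None \<Rightarrow> None | Some M \<Rightarrow>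
     (case expose \<Gamma> M of Arr A B \<Rightarrow> (if \<Gamma> \<turnstile>\<^sub>t t : A then Some B else None) | _ \<Rightarrow> None))"
| "synth \<Gamma> (TApp s S') = (case synth \<Gamma> s of None \<Rightarrow> None | Some M \<Rightarrow>
     (case expose \<Gamma> M of
        All A B \<Rightarrow> (if alg_sub \<Gamma> S' A then Some (substT B 0 S') else None)
      | _ \<Rightarrow> None))"

lemma synth_sound: "wfE \<Gamma> \<Longrightarrow> wf_trm \<Gamma> t \<Longrightarrow> synth \<Gamma> t = Some M \<Longrightarrow> \<Gamma> \<turnstile>\<^sub>t t : M"
proof (induction t arbitrary: M)
  case TopT
  then show ?case by (auto intro: T_Top)
next
  case (Var i)
  then obtain U where U: "\<Gamma> ! i = VarB U" "i < length \<Gamma>" using is_VarB_iff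
    by (auto split: if_splits)
  then show ?case using Var T_Var[OF Var(1) U(2) U(1)] by simp
next
  case (App s u)
  obtain M0 where M0: "synth \<Gamma> s = Some M0" using App.prems by (auto split: option.splits)
  have s: "\<Gamma> \<turnstile>\<^sub>t s : M0" using App M0 by simp
  obtain A where E: "expose \<Gamma> M0 = Arr A M" "\<Gamma> \<turnstile>\<^sub>t u : A"
    using App.prems M0 by (auto split: ty.splits if_splits)
  have wM0: "wfT \<Gamma> M0" using typing_wf[OF s] by simp
  have "\<Gamma> \<turnstile>\<^sub>s M0 <: Arr A M"
    using subtype_expose[OF App.prems(1) wM0] E by simp
  then show ?case using T_App[OF T_Sub[OF s] E(2)] by blast
next
  case (TApp s S')
  obtain M0 where M0: "synth \<Gamma> s = Some M0" using TApp.prems by (auto split: option.splits)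
  have s: "\<Gamma> \<turnstile>\<^sub>t s : M0" using TApp M0 by simp
  obtain A B where E: "expose \<Gamma> M0 = All A B" "alg_sub \<Gamma> S' A" "M = substT B 0 S'"
    using TApp.prems M0 by (auto split: ty.splits if_splits)
  have wM0: "wfT \<Gamma> M0" using typing_wf[OF s] by simp
  have wE: "wfT \<Gamma> (All A B)" using wfT_expose[OF TApp.prems(1) wM0] E by simp
  have "\<Gamma> \<turnstile>\<^sub>s M0 <: All A B"
    using subtype_expose[OF TApp.prems(1) wM0] E by simp
  moreover have "\<Gamma> \<turnstile>\<^sub>s S' <: A" using alg_sub_sound[OF E(2) TApp.prems(1)] TApp.prems(2) wE by simp
  ultimately show ?case using T_TApp[OF T_Sub[OF s]] E(3) by blast
qed simp_all

lemma synth_complete: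
  "\<Gamma> \<turnstile>\<^sub>t t : R \<Longrightarrow> wfE \<Gamma> \<Longrightarrow> wf_trm \<Gamma> t \<Longrightarrow> beta_normal t \<Longrightarrow> \<not> is_abs t \<Longrightarrow>
    \<exists>M. synth \<Gamma> t = Some M \<and> alg_sub \<Gamma> M R"
proof (induction t arbitrary: R)
  case TopT
  then show ?case using typing_TopT_inv by auto
next
  case (Var i)
  then show ?case using typing_Var_inv[OF Var.prems(1) refl] by auto
next
  case (App s u)
  obtain S T where H: "\<Gamma> \<turnstile>\<^sub>t s : Arr S T" "\<Gamma> \<turnstile>\<^sub>t u : S" "alg_sub \<Gamma> T R"
    using typing_App_inv[OF App.prems(1) refl] by blast
  have "\<not> is_abs s" using App.prems(4) H(1) typing_TAbs_not_Arr by (cases s) auto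
  then obtain M where M: "synth \<Gamma> s = Some M" "alg_sub \<Gamma> M (Arr S T)"
    using App.IH(1)[OF H(1) App.prems(2)] App.prems by auto
  obtain S1 T1 where E: "expose \<Gamma> M = Arr S1 T1" "alg_sub \<Gamma> S S1" "alg_sub \<Gamma> T1 T"
    using alg_sub_Arr_expose[OF M(2)] by blast
  have wM: "wfT \<Gamma> M" using typing_wf[OF synth_sound[OF App.prems(2) _ M(1)]] App.prems(3) by simp
  have wE: "wfT \<Gamma> (Arr S1 T1)" using wfT_expose[OF App.prems(2) wM] E by simp
  have wS: "wfT \<Gamma> S" using typing_wf[OF H(2)] by simp
  have "\<Gamma> \<turnstile>\<^sub>t u : S1" using T_Sub[OF H(2) alg_sub_sound[OF E(2) App.prems(2) wS]] wE by simp
  then show ?case using M E H(3) alg_sub_trans by auto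
next
  case (TApp s S')
  obtain S T where H: "\<Gamma> \<turnstile>\<^sub>t s : All S T" "\<Gamma> \<turnstile>\<^sub>s S' <: S" "alg_sub \<Gamma> (substT T 0 S') R"
    using typing_TApp_inv[OF TApp.prems(1) refl] by blast
  have "\<not> is_abs s" using TApp.prems(4) H(1) typing_Abs_not_All by (cases s) auto
  then obtain M where M: "synth \<Gamma> s = Some M" "alg_sub \<Gamma> M (All S T)"
    using TApp.IH(1)[OF H(1) TApp.prems(2)] TApp.prems by auto
  obtain S1 T1 where E: "expose \<Gamma> M = All S1 T1" "alg_sub \<Gamma> S S1" "alg_sub (TVarB Top # \<Gamma>) T1 T"
    using alg_sub_All_expose[OF M(2)] by blast
  have a1: "alg_sub \<Gamma> S' S1" using alg_sub_trans[OF alg_sub_complete[OF H(2)] E(2)] .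
  have a2: "alg_sub \<Gamma> (substT T1 0 S') (substT T 0 S')"
    using alg_sub_subst_Top[OF E(3), of 0 \<Gamma> S'] by simp
  show ?case using M E a1 alg_sub_trans[OF a2 H(3)] by auto
qed (auto)

lemma typing_Abs_iff:
  assumes wf: "wfE \<Gamma>" "wfT \<Gamma> S" "wfT \<Gamma> T"
  shows "\<Gamma> \<turnstile>\<^sub>t Abs S u : T \<longleftrightarrow> (T = Top \<and> VarB S # \<Gamma> \<turnstile>\<^sub>t u : Top) \<or>
     (\<exists>S' T'. T = Arr S' T' \<and> alg_sub \<Gamma> S' S \<and> VarB S # \<Gamma> \<turnstile>\<^sub>t u : liftT 1 0 T')"
proof
  assume H: "\<Gamma> \<turnstile>\<^sub>t Abs S u : T"
  obtain T0 where T0: "VarB S # \<Gamma> \<turnstile>\<^sub>t u : T0" "alg_sub \<Gamma> (Arr S (substT T0 0 Top)) T"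
    using typing_Abs_inv[OF H refl] by blast
  have wT0: "wfT (VarB S # \<Gamma>) T0" and wE: "wfE (VarB S # \<Gamma>)" using typing_wf[OF T0(1)] by auto
  from alg_sub_ArrE[OF T0(2)] show "(T = Top \<and> VarB S # \<Gamma> \<turnstile>\<^sub>t u : Top) \<or>
     (\<exists>S' T'. T = Arr S' T' \<and> alg_sub \<Gamma> S' S \<and> VarB S # \<Gamma> \<turnstile>\<^sub>t u : liftT 1 0 T')"
  proof (elim disjE exE conjE)
    assume "T = Top"
    moreover have "VarB S # \<Gamma> \<turnstile>\<^sub>t u : Top" using T_Sub[OF T0(1) SA_Top[OF wE wT0]] .
    ultimately show ?thesis by simp
  next
    fix S' T' assume A: "T = Arr S' T'" "alg_sub \<Gamma> S' S" "alg_sub \<Gamma> (substT T0 0 Top) T'"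
    have e: "liftT 1 0 (substT T0 0 Top) = T0" by (rule liftT_substT_Top[OF wT0]) simp_all
    have "alg_sub (VarB S # \<Gamma>) T0 (liftT 1 0 T')"
      using alg_sub_weaken[OF A(3), of 0 \<Gamma> "VarB S"] e by simp
    moreover have "wfT (VarB S # \<Gamma>) (liftT 1 0 T')"
      using wfT_liftT0[of \<Gamma> T' "[VarB S]"] wf A(1) by simp
    ultimately have "VarB S # \<Gamma> \<turnstile>\<^sub>t u : liftT 1 0 T'"
      using T_Sub[OF T0(1) alg_sub_sound] wE wT0 by blast
    then show ?thesis using A by blast
  qed
next
  assume "(T = Top \<and> VarB S # \<Gamma> \<turnstile>\<^sub>t u : Top) \<or> (\<exists>S' T'. T = Arr S' T' \<and> alg_sub \<Gamma> S' S \<and>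
      VarB S # \<Gamma> \<turnstile>\<^sub>t u : liftT 1 0 T')"
  then show "\<Gamma> \<turnstile>\<^sub>t Abs S u : T"
  proof (elim disjE exE conjE)
    assume "T = Top" "VarB S # \<Gamma> \<turnstile>\<^sub>t u : Top"
    then show ?thesis using T_Sub[OF T_Abs SA_Top[OF wf(1)]] wf by fastforce
  next
    fix S' T' assume A: "T = Arr S' T'" "alg_sub \<Gamma> S' S" "VarB S # \<Gamma> \<turnstile>\<^sub>t u : liftT 1 0 T'"
    have "\<Gamma> \<turnstile>\<^sub>t Abs S u : Arr S T'" using T_Abs[OF A(3)] by simp
    moreover have "\<Gamma> \<turnstile>\<^sub>s Arr S T' <: Arr S' T'"
      using SA_Arr[OF alg_sub_sound[OF A(2) wf(1)] SA_Refl[OF wf(1)]] wf A(1) by simp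
    ultimately show ?thesis using A(1) T_Sub by blast
  qed
qed

lemma typing_TAbs_iff:
  assumes wf: "wfE \<Gamma>" "wfT \<Gamma> S" "wfT \<Gamma> T"
  shows "\<Gamma> \<turnstile>\<^sub>t TAbs S u : T \<longleftrightarrow> (T = Top \<and> TVarB S # \<Gamma> \<turnstile>\<^sub>t u : Top) \<or>
     (\<exists>S' T'. T = All S' T' \<and> alg_sub \<Gamma> S' S \<and> TVarB S # \<Gamma> \<turnstile>\<^sub>t u : T')"
proof
  assume H: "\<Gamma> \<turnstile>\<^sub>t TAbs S u : T"
  obtain T0 where T0: "TVarB S # \<Gamma> \<turnstile>\<^sub>t u : T0" "alg_sub \<Gamma> (All S T0) T"
    using typing_TAbs_inv[OF H refl] by blast
  have wT0: "wfT (TVarB S # \<Gamma>) T0" and wE: "wfE (TVarB S # \<Gamma>)" using typing_wf[OF T0(1)] by auto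
  from alg_sub_AllE[OF T0(2)] show "(T = Top \<and> TVarB S # \<Gamma> \<turnstile>\<^sub>t u : Top) \<or>
     (\<exists>S' T'. T = All S' T' \<and> alg_sub \<Gamma> S' S \<and> TVarB S # \<Gamma> \<turnstile>\<^sub>t u : T')"
  proof (elim disjE exE conjE)
    assume "T = Top"
    moreover have "TVarB S # \<Gamma> \<turnstile>\<^sub>t u : Top" using T_Sub[OF T0(1) SA_Top[OF wE wT0]] .
    ultimately show ?thesis by simp
  next
    fix S' T' assume A: "T = All S' T'" "alg_sub \<Gamma> S' S" "alg_sub (TVarB Top # \<Gamma>) T0 T'"
    have "alg_sub (TVarB S # \<Gamma>) T0 T'" using alg_sub_narrow[OF A(3), of "[]" \<Gamma> S] by simp
    moreover have "wfT (TVarB S # \<Gamma>) T'"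
      using wf(3) A(1) wfT_cong[of "TVarB S' # \<Gamma>" "TVarB S # \<Gamma>" T'] by simp
    ultimately have "TVarB S # \<Gamma> \<turnstile>\<^sub>t u : T'" using T_Sub[OF T0(1) alg_sub_sound] wE wT0 by blast
    then show ?thesis using A by blast
  qed
next
  assume "(T = Top \<and> TVarB S # \<Gamma> \<turnstile>\<^sub>t u : Top) \<or> (\<exists>S' T'. T = All S' T' \<and> alg_sub \<Gamma> S' S \<and>
      TVarB S # \<Gamma> \<turnstile>\<^sub>t u : T')"
  then show "\<Gamma> \<turnstile>\<^sub>t TAbs S u : T"
  proof (elim disjE exE conjE)
    assume "T = Top" "TVarB S # \<Gamma> \<turnstile>\<^sub>t u : Top"
    then show ?thesis using T_Sub[OF T_TAbs SA_Top[OF wf(1)]] wf by fastforce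
  next
    fix S' T' assume A: "T = All S' T'" "alg_sub \<Gamma> S' S" "TVarB S # \<Gamma> \<turnstile>\<^sub>t u : T'"
    have "\<Gamma> \<turnstile>\<^sub>t TAbs S u : All S T'" using T_TAbs[OF A(3)] by simp
    moreover have wT': "wfT (TVarB Top # \<Gamma>) T'"
      using wf(3) A(1) wfT_cong[of "TVarB S' # \<Gamma>" "TVarB Top # \<Gamma>" T'] by simp
    moreover have "\<Gamma> \<turnstile>\<^sub>s All S T' <: All S' T'"
      using SA_All_Top[OF alg_sub_sound[OF A(2) wf(1)] SA_Refl[OF _ wT']] wf A(1) by simp
    ultimately show ?thesis using A(1) T_Sub by blast
  qed
qed

lemma typing_neutral_iff:
  assumes wf: "wfE \<Gamma>" "wf_trm \<Gamma> t" "wfT \<Gamma> T" and bn: "beta_normal t"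
    and na: "\<not> is_abs t"
  shows "\<Gamma> \<turnstile>\<^sub>t t : T \<longleftrightarrow> (\<exists>M. synth \<Gamma> t = Some M \<and> alg_sub \<Gamma> M T)"
proof
  assume "\<Gamma> \<turnstile>\<^sub>t t : T" then show "\<exists>M. synth \<Gamma> t = Some M \<and> alg_sub \<Gamma> M T"
    using synth_complete wf bn na by blast
next
  assume "\<exists>M. synth \<Gamma> t = Some M \<and> alg_sub \<Gamma> M T"
  then obtain M where M: "synth \<Gamma> t = Some M" "alg_sub \<Gamma> M T" by blast
  have t: "\<Gamma> \<turnstile>\<^sub>t t : M" by (rule synth_sound[OF wf(1,2) M(1)])
  show "\<Gamma> \<turnstile>\<^sub>t t : T" using T_Sub[OF t alg_sub_sound[OF M(2) wf(1)]] typing_wf[OF t] wf by blast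
qed

text \<open>Algorithmic subtyping terminates because a variable weighs one more than its bound, so
  unfolding it decreases the weight; a variable bound by a quantifier is compared under the bound
  \<open>Top\<close> and therefore weighs 2.\<close>

primrec weight :: "nat list \<Rightarrow> ty \<Rightarrow> nat" where
  "weight ws Top = 1"
| "weight ws (TVar i) = (if i < length ws then ws ! i else 1)"
| "weight ws (Arr S T) = Suc (weight ws S + weight ws T)"
| "weight ws (All S T) = Suc (weight ws S + weight (2 # ws) T)"

fun env_weights :: "env \<Rightarrow> nat list" where
  "env_weights [] = []"
| "env_weights (VarB U # \<Gamma>) = 1 # env_weights \<Gamma>"
| "env_weights (TVarB U # \<Gamma>) = Suc (weight (env_weights \<Gamma>) U) # env_weights \<Gamma>"

lemma weight_liftT:
  "weight (ws1 @ ws2 @ ws3) (liftT (length ws2) (length ws1) U) = weight (ws1 @ ws3) U"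
proof (induct U arbitrary: ws1)
  case (TVar i)
  then show ?case by (auto simp: nth_append)
next
  case (Arr S T)
  show ?case using Arr(1)[of ws1] Arr(2)[of ws1] by simp
next
  case (All S T)
  show ?case using All(1)[of ws1] All(2)[of "2 # ws1"] by simp
qed simp

lemma length_env_weights[simp]: "length (env_weights \<Gamma>) = length \<Gamma>"
  by (induct \<Gamma> rule: env_weights.induct) auto

lemma drop_env_weights: "drop n (env_weights \<Gamma>) = env_weights (drop n \<Gamma>)"
proof (induct \<Gamma> arbitrary: n rule: env_weights.induct)
  case (2 U \<Gamma>) then show ?case by (cases n) auto
next
  case (3 U \<Gamma>) then show ?case by (cases n) auto
qed simp

lemma nth_env_weights:
  "i < length \<Gamma> \<Longrightarrow> \<Gamma> ! i = TVarB U \<Longrightarrow>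
    env_weights \<Gamma> ! i = Suc (weight (env_weights (drop (Suc i) \<Gamma>)) U)"
proof (induct \<Gamma> arbitrary: i rule: env_weights.induct)
  case (2 V \<Gamma>) then show ?case by (cases i) auto
next
  case (3 V \<Gamma>) then show ?case by (cases i) auto
qed simp

lemma weight_TVar_bound_less:
  "i < length \<Gamma> \<Longrightarrow> \<Gamma> ! i = TVarB U \<Longrightarrow>
    weight (env_weights \<Gamma>) (liftT (Suc i) 0 U) < weight (env_weights \<Gamma>) (TVar i)"
proof -
  assume i: "i < length \<Gamma>" "\<Gamma> ! i = TVarB U"
  have "env_weights \<Gamma> = [] @ take (Suc i) (env_weights \<Gamma>) @ drop (Suc i) (env_weights \<Gamma>)" by simp
  then have "weight (env_weights \<Gamma>) (liftT (Suc i) 0 U) =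
      weight ([] @ drop (Suc i) (env_weights \<Gamma>)) U"
    using weight_liftT[of "[]" "take (Suc i) (env_weights \<Gamma>)" "drop (Suc i) (env_weights \<Gamma>)" U] i
      by (metis length_env_weights length_take list.size(3) min_absorb2 Suc_leI)
  then show ?thesis using i nth_env_weights[OF i] by (simp add: drop_env_weights)
qed

section \<open>Codes of types, terms and contexts\<close>

lemma enc_ty_npair [simp]:
  "enc_ty Top = npair 0 0" "enc_ty (TVar i) = npair 1 i"
  "enc_ty (Arr S T) = npair 2 (npair (enc_ty S) (enc_ty T))"
  "enc_ty (All S T) = npair 3 (npair (enc_ty S) (enc_ty T))"
  by (simp_all add: npair_def)

lemma enc_trm_npair [simp]:
  "enc_trm TopT = npair 0 0" "enc_trm (Var i) = npair 1 i"
  "enc_trm (Abs S t) = npair 2 (npair (enc_ty S) (enc_trm t))"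
  "enc_trm (TAbs S t) = npair 3 (npair (enc_ty S) (enc_trm t))"
  "enc_trm (App s t) = npair 4 (npair (enc_trm s) (enc_trm t))"
  "enc_trm (TApp t S) = npair 5 (npair (enc_trm t) (enc_ty S))"
  by (simp_all add: npair_def)

lemma enc_binding_npair [simp]:
  "enc_binding (VarB T) = npair 0 (enc_ty T)" "enc_binding (TVarB T) = npair 1 (enc_ty T)"
  by (simp_all add: npair_def)

lemma enc_env_simps [simp]:
  "enc_env [] = 0" "enc_env (B # \<Gamma>) = Suc (npair (enc_binding B) (enc_env \<Gamma>))"
  by (simp_all add: enc_env_def npair_def)

declare enc_ty.simps [simp del] enc_trm.simps [simp del] enc_binding.simps [simp del]

lemma inj_enc_ty: "inj enc_ty"
proof (rule injI)
  show "enc_ty S = enc_ty T \<Longrightarrow> S = T" for S T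
    by (induct S arbitrary: T; case_tac T; simp)
qed

lemma inj_enc_trm: "inj enc_trm"
proof (rule injI)
  show "enc_trm s = enc_trm t \<Longrightarrow> s = t" for s t
    by (induct s arbitrary: t; case_tac t; simp add: inj_eq[OF inj_enc_ty])
qed

lemma inj_enc_binding: "inj enc_binding"
proof (rule injI)
  show "enc_binding s = enc_binding t \<Longrightarrow> s = t" for s t
    by (cases s; cases t; simp add: inj_eq[OF inj_enc_ty])
qed

lemma inj_enc_env: "inj enc_env"
proof (rule injI)
  show "enc_env s = enc_env t \<Longrightarrow> s = t" for s t
    by (induct s arbitrary: t; case_tac t; simp add: inj_eq[OF inj_enc_binding])
qed

definition dec_ty :: "nat \<Rightarrow> ty" where "dec_ty = inv enc_ty"
definition dec_trm :: "nat \<Rightarrow> trm" where "dec_trm = inv enc_trm"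
definition dec_env :: "nat \<Rightarrow> env" where "dec_env = inv enc_env"

lemma dec_ty_enc [simp]: "dec_ty (enc_ty T) = T"
  unfolding dec_ty_def by (rule inv_f_f[OF inj_enc_ty])

lemma dec_trm_enc [simp]: "dec_trm (enc_trm t) = t"
  unfolding dec_trm_def by (rule inv_f_f[OF inj_enc_trm])

lemma dec_env_enc [simp]: "dec_env (enc_env \<Gamma>) = \<Gamma>"
  unfolding dec_env_def by (rule inv_f_f[OF inj_enc_env])

lemma dec_ty_npair [simp]:
  "dec_ty (npair 0 0) = Top" "dec_ty (npair 1 i) = TVar i" "dec_ty (npair (Suc 0) i) = TVar i"
  "dec_ty (npair 2 (npair (enc_ty S) (enc_ty T))) = Arr S T"
  "dec_ty (npair 3 (npair (enc_ty S) (enc_ty T))) = All S T"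
  using dec_ty_enc[of Top] dec_ty_enc[of "TVar i"] dec_ty_enc[of "Arr S T"] dec_ty_enc[of "All S T"]
  by simp_all

lemma dec_trm_npair [simp]:
  "dec_trm (npair 0 0) = TopT" "dec_trm (npair 1 i) = Var i" "dec_trm (npair (Suc 0) i) = Var i"
  "dec_trm (npair 2 (npair (enc_ty S) (enc_trm t))) = Abs S t"
  "dec_trm (npair 3 (npair (enc_ty S) (enc_trm t))) = TAbs S t"
  "dec_trm (npair 4 (npair (enc_trm s) (enc_trm t))) = App s t"
  "dec_trm (npair 5 (npair (enc_trm t) (enc_ty S))) = TApp t S"
  using dec_trm_enc[of TopT] dec_trm_enc[of "Var i"] dec_trm_enc[of "Abs S t"]
    dec_trm_enc[of "TAbs S t"] dec_trm_enc[of "App s t"] dec_trm_enc[of "TApp t S"]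
  by simp_all

definition tl_code :: "nat \<Rightarrow> nat" where "tl_code l = nsnd (l - 1)"
definition nth_code :: "nat \<Rightarrow> nat \<Rightarrow> nat" where "nth_code l i = nfst ((tl_code ^^ i) l - 1)"

lemma funpow_tl_code: "i \<le> length \<Gamma> \<Longrightarrow> (tl_code ^^ i) (enc_env \<Gamma>) = enc_env (drop i \<Gamma>)"
proof (induct i)
  case (Suc i)
  then have "drop i \<Gamma> = \<Gamma> ! i # drop (Suc i) \<Gamma>" by (simp add: Cons_nth_drop_Suc)
  then show ?case using Suc by (simp add: tl_code_def)
qed simp

lemma nth_code_enc_env: "i < length \<Gamma> \<Longrightarrow> nth_code (enc_env \<Gamma>) i = enc_binding (\<Gamma> ! i)"
proof -
  assume i: "i < length \<Gamma>"
  then have "drop i \<Gamma> = \<Gamma> ! i # drop (Suc i) \<Gamma>" by (simp add: Cons_nth_drop_Suc)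
  then show ?thesis using funpow_tl_code[of i \<Gamma>] i by (simp add: nth_code_def)
qed

lemma computable_on_nth_code:
  "computable_on P a \<Longrightarrow> computable_on P b \<Longrightarrow> computable_on P (\<lambda>x. nth_code (a x) (b x))"
  unfolding nth_code_def tl_code_def
  by (intro computable_on_intros computable_on_funpow[where Q="\<lambda>_. True"]) auto

section \<open>Computability of the algorithm\<close>

text \<open>Each function below is computed by an interpretation of \<^locale>\<open>recursion_scheme\<close>; its
  argument is a tuple of codes, and its structural recursion is spelt out on codes by the
  functions \<open>_leaf\<close>, \<open>_base\<close>, \<open>_call1\<close>, \<open>_call2\<close> and \<open>_combine\<close>. Type codes carry the tags
  0, 1, 2, 3 for \<^const>\<open>Top\<close>, \<^const>\<open>TVar\<close>, \<^const>\<open>Arr\<close>, \<^const>\<open>All\<close>.\<close>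

definition lift_dom :: "nat \<Rightarrow> bool" where
  "lift_dom x \<longleftrightarrow> (\<exists>n k T. x = npair n (npair k (enc_ty T)))"

definition lift_code :: "nat \<Rightarrow> nat" where
  "lift_code x = enc_ty (liftT (nfst x) (nfst (nsnd x)) (dec_ty (nsnd (nsnd x))))"

definition lift_size :: "nat \<Rightarrow> nat" where "lift_size x = size (dec_ty (nsnd (nsnd x)))"

definition lift_leaf :: "nat \<Rightarrow> bool" where "lift_leaf x \<longleftrightarrow> nfst (nsnd (nsnd x)) < 2"

definition lift_base :: "nat \<Rightarrow> nat" where
  "lift_base x = (let n = nfst x; k = nfst (nsnd x); T = nsnd (nsnd x) in
     if nfst T = 1 \<and> k \<le> nsnd T then npair 1 (nsnd T + n) else T)"

definition lift_call1 :: "nat \<Rightarrow> nat" where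
  "lift_call1 x = (let n = nfst x; k = nfst (nsnd x); T = nsnd (nsnd x) in
     npair n (npair k (nfst (nsnd T))))"

definition lift_call2 :: "nat \<Rightarrow> nat" where
  "lift_call2 y = (let n = nfst (nfst y); k = nfst (nsnd (nfst y)); T = nsnd (nsnd (nfst y)) in
     npair n (npair (if nfst T = 3 then Suc k else k) (nsnd (nsnd T))))"

definition lift_combine :: "nat \<Rightarrow> nat" where
  "lift_combine y = npair (nfst (nsnd (nsnd (nfst y)))) (npair (nfst (nsnd y)) (nsnd (nsnd y)))"

lemma lift_code_enc [simp]: "lift_code (npair n (npair k (enc_ty T))) = enc_ty (liftT n k T)"
  by (simp add: lift_code_def)

interpretation lift_machine: recursion_scheme lift_dom lift_code lift_size lift_leaf lift_base
  lift_call1 lift_call2 lift_combine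
proof
  show "computable_on lift_dom (\<lambda>x. of_bool (lift_leaf x))"
    unfolding lift_leaf_def by (intro computable_on_intros)
  show "computable_on (\<lambda>x. lift_dom x \<and> lift_leaf x) lift_base"
    unfolding lift_base_def Let_def by (intro computable_on_intros)
  show "computable_on (\<lambda>x. lift_dom x \<and> \<not> lift_leaf x) lift_call1"
    unfolding lift_call1_def Let_def by (intro computable_on_intros)
  show "computable_on (\<lambda>y. lift_dom (nfst y) \<and> \<not> lift_leaf (nfst y) \<and>
      nsnd y = lift_code (lift_call1 (nfst y))) lift_call2"
    unfolding lift_call2_def Let_def by (intro computable_on_intros)
  show "computable_on (\<lambda>y. lift_dom (nfst y) \<and> \<not> lift_leaf (nfst y) \<and>
      nfst (nsnd y) = lift_code (lift_call1 (nfst y)) \<and>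
      nsnd (nsnd y) = lift_code (lift_call2 (npair (nfst y) (nfst (nsnd y))))) lift_combine"
    unfolding lift_combine_def by (intro computable_on_intros)
  show "lift_code x = lift_base x" if "lift_dom x" "lift_leaf x" for x
    using that by (auto simp: lift_dom_def lift_leaf_def lift_base_def Let_def split: ty.splits)
      (case_tac T; simp)+
  show "recursion_step lift_dom lift_code lift_size lift_call1 lift_call2 lift_combine x"
    if "lift_dom x" "\<not> lift_leaf x" for x
    using that by (auto simp: recursion_step_def Let_def lift_dom_def lift_leaf_def lift_call1_def
        lift_call2_def lift_combine_def lift_size_def) (case_tac T; auto simp: lift_dom_def)+
qed

lemma computable_on_lift_code:
  "computable_on P a \<Longrightarrow> (\<And>x. P x \<Longrightarrow> lift_dom (a x)) \<Longrightarrow> computable_on P (\<lambda>x. lift_code (a x))"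
  by (rule computable_on_comp[OF lift_machine.computable])

definition bound_code :: "nat \<Rightarrow> nat \<Rightarrow> nat" where
  "bound_code g i = lift_code (npair (Suc i) (npair 0 (nsnd (nth_code g i))))"

lemma bound_code_enc_env:
  "i < length \<Gamma> \<Longrightarrow> bound_code (enc_env \<Gamma>) i = enc_ty (liftT (Suc i) 0 (bty (\<Gamma> ! i)))"
  by (cases "\<Gamma> ! i") (simp_all add: bound_code_def nth_code_enc_env)

lemma computable_on_bound_code:
  assumes "computable_on P g" and "computable_on P i"
    and "\<And>x. P x \<Longrightarrow> \<exists>\<Gamma>. g x = enc_env \<Gamma> \<and> i x < length \<Gamma>"
  shows "computable_on P (\<lambda>x. bound_code (g x) (i x))"
  unfolding bound_code_def
proof (intro computable_on_lift_code computable_on_intros computable_on_nth_code assms)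
  show "lift_dom (npair (Suc (i x)) (npair 0 (nsnd (nth_code (g x) (i x)))))" if Px: "P x" for x
  proof -
    obtain \<Gamma> where "g x = enc_env \<Gamma>" "i x < length \<Gamma>" using assms(3)[OF Px] by blast
    then show ?thesis by (cases "\<Gamma> ! i x") (auto simp: lift_dom_def nth_code_enc_env)
  qed
qed

definition subst_dom :: "nat \<Rightarrow> bool" where
  "subst_dom x \<longleftrightarrow> (\<exists>T k U. x = npair (enc_ty T) (npair k (enc_ty U)))"

definition subst_code :: "nat \<Rightarrow> nat" where
  "subst_code x = enc_ty (substT (dec_ty (nfst x)) (nfst (nsnd x)) (dec_ty (nsnd (nsnd x))))"

definition subst_size :: "nat \<Rightarrow> nat" where "subst_size x = size (dec_ty (nfst x))"

definition subst_leaf :: "nat \<Rightarrow> bool" where "subst_leaf x \<longleftrightarrow> nfst (nfst x) < 2"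

definition subst_base :: "nat \<Rightarrow> nat" where
  "subst_base x = (let T = nfst x; k = nfst (nsnd x); U = nsnd (nsnd x) in
     if nfst T = 1 \<and> k < nsnd T then npair 1 (nsnd T - 1)
     else if nfst T = 1 \<and> nsnd T = k then lift_code (npair k (npair 0 U))
     else T)"

definition subst_call1 :: "nat \<Rightarrow> nat" where "subst_call1 x = npair (nfst (nsnd (nfst x))) (nsnd x)"

definition subst_call2 :: "nat \<Rightarrow> nat" where
  "subst_call2 y = (let T = nfst (nfst y); k = nfst (nsnd (nfst y)); U = nsnd (nsnd (nfst y)) in
     npair (nsnd (nsnd T)) (npair (if nfst T = 3 then Suc k else k) U))"

definition subst_combine :: "nat \<Rightarrow> nat" where
  "subst_combine y = npair (nfst (nfst (nfst y))) (npair (nfst (nsnd y)) (nsnd (nsnd y)))"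

lemma subst_code_enc [simp]:
  "subst_code (npair (enc_ty T) (npair k (enc_ty U))) = enc_ty (substT T k U)"
  by (simp add: subst_code_def)

interpretation subst_machine: recursion_scheme subst_dom subst_code subst_size subst_leaf subst_base
  subst_call1 subst_call2 subst_combine
proof
  show "computable_on subst_dom (\<lambda>x. of_bool (subst_leaf x))"
    unfolding subst_leaf_def by (intro computable_on_intros)
  show "computable_on (\<lambda>x. subst_dom x \<and> subst_leaf x) subst_base"
    unfolding subst_base_def Let_def
    by (intro computable_on_intros computable_on_lift_code) (auto simp: subst_dom_def lift_dom_def)
  show "computable_on (\<lambda>x. subst_dom x \<and> \<not> subst_leaf x) subst_call1"
    unfolding subst_call1_def by (intro computable_on_intros)
  show "computable_on (\<lambda>y. subst_dom (nfst y) \<and> \<not> subst_leaf (nfst y) \<and>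
      nsnd y = subst_code (subst_call1 (nfst y))) subst_call2"
    unfolding subst_call2_def Let_def by (intro computable_on_intros)
  show "computable_on (\<lambda>y. subst_dom (nfst y) \<and> \<not> subst_leaf (nfst y) \<and>
      nfst (nsnd y) = subst_code (subst_call1 (nfst y)) \<and>
      nsnd (nsnd y) = subst_code (subst_call2 (npair (nfst y) (nfst (nsnd y))))) subst_combine"
    unfolding subst_combine_def by (intro computable_on_intros)
  show "subst_code x = subst_base x" if dom: "subst_dom x" and leaf: "subst_leaf x" for x
  proof -
    obtain T k U where x: "x = npair (enc_ty T) (npair k (enc_ty U))"
      using dom unfolding subst_dom_def by blast
    show ?thesis using leaf unfolding x subst_code_enc
      by (cases T) (auto simp: subst_leaf_def subst_base_def)
  qed
  show "recursion_step subst_dom subst_code subst_size subst_call1 subst_call2 subst_combine x"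
    if dom: "subst_dom x" and node: "\<not> subst_leaf x" for x
  proof -
    obtain T k U where x: "x = npair (enc_ty T) (npair k (enc_ty U))"
      using dom unfolding subst_dom_def by blast
    show ?thesis using node unfolding x
      by (cases T) (auto simp: recursion_step_def subst_leaf_def subst_call1_def subst_call2_def
          subst_combine_def subst_size_def subst_dom_def subst_code_def)
  qed
qed

lemma computable_on_subst_code:
  "computable_on P a \<Longrightarrow> (\<And>x. P x \<Longrightarrow> subst_dom (a x)) \<Longrightarrow> computable_on P (\<lambda>x. subst_code (a x))"
  by (rule computable_on_comp[OF subst_machine.computable])

definition exposure_dom :: "nat \<Rightarrow> bool" where
  "exposure_dom x \<longleftrightarrow> (\<exists>\<Gamma> T. x = npair (enc_env \<Gamma>) (enc_ty T) \<and> wfE \<Gamma> \<and> wfT \<Gamma> T)"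

definition exposure_code :: "nat \<Rightarrow> nat" where
  "exposure_code x = enc_ty (expose (dec_env (nfst x)) (dec_ty (nsnd x)))"

definition exposure_size :: "nat \<Rightarrow> nat" where
  "exposure_size x = (case dec_ty (nsnd x) of TVar i \<Rightarrow> length (dec_env (nfst x)) - i | _ \<Rightarrow> 0)"

definition exposure_leaf :: "nat \<Rightarrow> bool" where "exposure_leaf x \<longleftrightarrow> nfst (nsnd x) \<noteq> 1"

definition exposure_call1 :: "nat \<Rightarrow> nat" where
  "exposure_call1 x = npair (nfst x) (bound_code (nfst x) (nsnd (nsnd x)))"

text \<open>Exposure makes a single recursive call, which the second call repeats.\<close>

definition exposure_call2 :: "nat \<Rightarrow> nat" where "exposure_call2 y = exposure_call1 (nfst y)"

lemma exposure_code_enc [simp]: "exposure_code (npair (enc_env \<Gamma>) (enc_ty T)) = enc_ty (expose \<Gamma> T)"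
  by (simp add: exposure_code_def)

lemma exposure_dom_TVar:
  assumes "exposure_dom x" and "\<not> exposure_leaf x"
  obtains \<Gamma> i U where "x = npair (enc_env \<Gamma>) (enc_ty (TVar i))" and "wfE \<Gamma>"
    and "i < length \<Gamma>" and "\<Gamma> ! i = TVarB U"
proof -
  obtain \<Gamma> T where x: "x = npair (enc_env \<Gamma>) (enc_ty T)" "wfE \<Gamma>" "wfT \<Gamma> T"
    using assms(1) unfolding exposure_dom_def by blast
  then obtain i where T: "T = TVar i" using assms(2) by (cases T) (auto simp: exposure_leaf_def)
  then show ?thesis using that x is_TVarB_iff by auto
qed

lemma exposure_step:
  assumes "exposure_dom x" and "\<not> exposure_leaf x"
  shows "recursion_step exposure_dom exposure_code exposure_size exposure_call1 exposure_call2
    (\<lambda>y. nfst (nsnd y)) x"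
proof -
  obtain \<Gamma> i U where x: "x = npair (enc_env \<Gamma>) (enc_ty (TVar i))" "wfE \<Gamma>" "i < length \<Gamma>"
    "\<Gamma> ! i = TVarB U" using assms by (rule exposure_dom_TVar)
  have call1: "exposure_call1 x = npair (enc_env \<Gamma>) (enc_ty (liftT (Suc i) 0 U))"
    using x by (simp add: exposure_call1_def bound_code_enc_env)
  show ?thesis
  proof (rule recursion_step_one_call)
    show "exposure_dom (exposure_call1 x)"
      using call1 x wfT_lookup[OF x(2,3)] unfolding exposure_dom_def by auto
    show "exposure_size (exposure_call1 x) < exposure_size x"
      using liftT_TVar_measure[OF x(3), of U]
      unfolding call1 unfolding x(1) exposure_size_def
      by (simp del: enc_ty_npair split: ty.splits)
  qed (use x call1 in \<open>simp_all add: exposure_call2_def del: enc_ty_npair\<close>)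
qed

interpretation exposure_machine: recursion_scheme exposure_dom exposure_code exposure_size
  exposure_leaf "\<lambda>x. nsnd x" exposure_call1 exposure_call2 "\<lambda>y. nfst (nsnd y)"
proof
  show "computable_on exposure_dom (\<lambda>x. of_bool (exposure_leaf x))"
    unfolding exposure_leaf_def by (intro computable_on_intros)
  show "computable_on (\<lambda>x. exposure_dom x \<and> exposure_leaf x) (\<lambda>x. nsnd x)"
    by (intro computable_on_intros)
  show call1: "computable_on (\<lambda>x. exposure_dom x \<and> \<not> exposure_leaf x) exposure_call1"
    unfolding exposure_call1_def
  proof (intro computable_on_intros computable_on_bound_code)
    show "\<exists>\<Gamma>. nfst x = enc_env \<Gamma> \<and> nsnd (nsnd x) < length \<Gamma>"
      if "exposure_dom x \<and> \<not> exposure_leaf x" for x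
      using that by (auto elim!: exposure_dom_TVar)
  qed
  show "computable_on (\<lambda>y. exposure_dom (nfst y) \<and> \<not> exposure_leaf (nfst y) \<and>
      nsnd y = exposure_code (exposure_call1 (nfst y))) exposure_call2"
    unfolding exposure_call2_def
    by (rule computable_on_comp[OF call1]) (intro computable_on_intros, auto)
  show "computable_on (\<lambda>y. exposure_dom (nfst y) \<and> \<not> exposure_leaf (nfst y) \<and>
      nfst (nsnd y) = exposure_code (exposure_call1 (nfst y)) \<and>
      nsnd (nsnd y) = exposure_code (exposure_call2 (npair (nfst y) (nfst (nsnd y)))))
      (\<lambda>y. nfst (nsnd y))"
    by (intro computable_on_intros)
  show "exposure_code x = nsnd x" if dom: "exposure_dom x" and leaf: "exposure_leaf x" for x
  proof -
    obtain \<Gamma> T where x: "x = npair (enc_env \<Gamma>) (enc_ty T)"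
      using dom unfolding exposure_dom_def by blast
    show ?thesis
      using leaf unfolding x exposure_code_enc by (cases T) (simp_all add: exposure_leaf_def)
  qed
  show "recursion_step exposure_dom exposure_code exposure_size exposure_call1 exposure_call2
      (\<lambda>y. nfst (nsnd y)) x" if "exposure_dom x" and "\<not> exposure_leaf x" for x
    using that by (rule exposure_step)
qed

lemma computable_on_exposure_code:
  "computable_on P a \<Longrightarrow> (\<And>x. P x \<Longrightarrow> exposure_dom (a x)) \<Longrightarrow>
    computable_on P (\<lambda>x. exposure_code (a x))"
  by (rule computable_on_comp[OF exposure_machine.computable])

definition alg_sub_dom :: "nat \<Rightarrow> bool" where
  "alg_sub_dom x \<longleftrightarrow> (\<exists>\<Gamma> S T. x = npair (enc_env \<Gamma>) (npair (enc_ty S) (enc_ty T)) \<and>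
     wfE \<Gamma> \<and> wfT \<Gamma> S \<and> wfT \<Gamma> T)"

definition alg_sub_code :: "nat \<Rightarrow> nat" where
  "alg_sub_code x =
    of_bool (alg_sub (dec_env (nfst x)) (dec_ty (nfst (nsnd x))) (dec_ty (nsnd (nsnd x))))"

definition alg_sub_size :: "nat \<Rightarrow> nat" where
  "alg_sub_size x = (let ws = env_weights (dec_env (nfst x)) in
     weight ws (dec_ty (nfst (nsnd x))) + weight ws (dec_ty (nsnd (nsnd x))))"

definition alg_sub_leaf :: "nat \<Rightarrow> bool" where
  "alg_sub_leaf x \<longleftrightarrow> (let S = nfst (nsnd x); T = nsnd (nsnd x) in
     nfst T = 0 \<or> (nfst S = 1 \<and> S = T) \<or>
     \<not> (nfst S = 1 \<or> (nfst S = 2 \<and> nfst T = 2) \<or> (nfst S = 3 \<and> nfst T = 3)))"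

definition alg_sub_base :: "nat \<Rightarrow> nat" where
  "alg_sub_base x = (let S = nfst (nsnd x); T = nsnd (nsnd x) in
     of_bool (nfst T = 0 \<or> (nfst S = 1 \<and> S = T)))"

definition alg_sub_call1 :: "nat \<Rightarrow> nat" where
  "alg_sub_call1 x = (let G = nfst x; S = nfst (nsnd x); T = nsnd (nsnd x) in
     if nfst S = 1 then npair G (npair (bound_code G (nsnd S)) T)
     else npair G (npair (nfst (nsnd T)) (nfst (nsnd S))))"

definition alg_sub_call2 :: "nat \<Rightarrow> nat" where
  "alg_sub_call2 y = (let G = nfst (nfst y); S = nfst (nsnd (nfst y)); T = nsnd (nsnd (nfst y)) in
     if nfst S = 1 then alg_sub_call1 (nfst y)
     else if nfst S = 2 then npair G (npair (nsnd (nsnd S)) (nsnd (nsnd T)))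
     else npair (Suc (npair (enc_binding (TVarB Top)) G)) (npair (nsnd (nsnd S)) (nsnd (nsnd T))))"

definition alg_sub_combine :: "nat \<Rightarrow> nat" where
  "alg_sub_combine y = (let S = nfst (nsnd (nfst y)); r1 = nfst (nsnd y); r2 = nsnd (nsnd y) in
     if nfst S = 1 then r1 else r1 * r2)"

lemma alg_sub_code_enc [simp]:
  "alg_sub_code (npair (enc_env \<Gamma>) (npair (enc_ty S) (enc_ty T))) = of_bool (alg_sub \<Gamma> S T)"
  by (simp add: alg_sub_code_def)

lemma alg_sub_size_enc:
  "alg_sub_size (npair (enc_env \<Gamma>) (npair (enc_ty S) (enc_ty T))) =
    weight (env_weights \<Gamma>) S + weight (env_weights \<Gamma>) T"
  by (simp add: alg_sub_size_def Let_def del: enc_ty_npair enc_env_simps)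

lemma alg_sub_dom_node:
  assumes "alg_sub_dom x" and "\<not> alg_sub_leaf x"
  obtains \<Gamma> i U T where "x = npair (enc_env \<Gamma>) (npair (enc_ty (TVar i)) (enc_ty T))"
      "wfE \<Gamma>" "wfT \<Gamma> T" "i < length \<Gamma>" "\<Gamma> ! i = TVarB U" "T \<noteq> Top" "T \<noteq> TVar i"
  | \<Gamma> S1 S2 T1 T2 where "x = npair (enc_env \<Gamma>) (npair (enc_ty (Arr S1 S2)) (enc_ty (Arr T1 T2)))"
      "wfE \<Gamma>" "wfT \<Gamma> (Arr S1 S2)" "wfT \<Gamma> (Arr T1 T2)"
  | \<Gamma> S1 S2 T1 T2 where "x = npair (enc_env \<Gamma>) (npair (enc_ty (All S1 S2)) (enc_ty (All T1 T2)))"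
      "wfE \<Gamma>" "wfT \<Gamma> (All S1 S2)" "wfT \<Gamma> (All T1 T2)"
proof -
  obtain \<Gamma> S T where x: "x = npair (enc_env \<Gamma>) (npair (enc_ty S) (enc_ty T))"
    and wf: "wfE \<Gamma>" "wfT \<Gamma> S" "wfT \<Gamma> T"
    using assms(1) unfolding alg_sub_dom_def by blast
  show ?thesis
  proof (cases S)
    case (TVar i)
    then obtain U where "i < length \<Gamma>" "\<Gamma> ! i = TVarB U" using wf(2) is_TVarB_iff by auto
    moreover have "T \<noteq> Top" "T \<noteq> TVar i"
      using assms(2) TVar unfolding x(1) by (auto simp: alg_sub_leaf_def)
    ultimately show ?thesis using that(1) x wf TVar by blast
  next
    case (Arr S1 S2)
    then obtain T1 T2 where "T = Arr T1 T2"
      using assms(2) unfolding x(1) by (cases T) (auto simp: alg_sub_leaf_def)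
    then show ?thesis using that(2) x wf Arr by blast
  next
    case (All S1 S2)
    then obtain T1 T2 where "T = All T1 T2"
      using assms(2) unfolding x(1) by (cases T) (auto simp: alg_sub_leaf_def)
    then show ?thesis using that(3) x wf All by blast
  qed (use assms(2) x(1) in \<open>auto simp: alg_sub_leaf_def\<close>)
qed

abbreviation alg_sub_step :: "nat \<Rightarrow> bool" where
  "alg_sub_step \<equiv>
    recursion_step alg_sub_dom alg_sub_code alg_sub_size alg_sub_call1 alg_sub_call2 alg_sub_combine"

lemma computable_alg_sub_call1: "computable_on (\<lambda>x. alg_sub_dom x \<and> \<not> alg_sub_leaf x) alg_sub_call1"
  unfolding alg_sub_call1_def Let_def
proof (intro computable_on_intros computable_on_bound_code)
  show "\<exists>\<Gamma>. nfst x = enc_env \<Gamma> \<and> nsnd (nfst (nsnd x)) < length \<Gamma>"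
    if "(alg_sub_dom x \<and> \<not> alg_sub_leaf x) \<and> nfst (nfst (nsnd x)) = 1" for x
    using that by (auto elim!: alg_sub_dom_node)
qed

lemma alg_sub_step_TVar:
  assumes x: "x = npair (enc_env \<Gamma>) (npair (enc_ty (TVar i)) (enc_ty T))"
    and wf: "wfE \<Gamma>" "wfT \<Gamma> T" and i: "i < length \<Gamma>" "\<Gamma> ! i = TVarB U" and T: "T \<noteq> Top" "T \<noteq> TVar i"
  shows "alg_sub_step x"
proof (rule recursion_step_one_call)
  have call1: "alg_sub_call1 x = npair (enc_env \<Gamma>) (npair (enc_ty (liftT (Suc i) 0 U)) (enc_ty T))"
    using i unfolding x by (simp add: alg_sub_call1_def bound_code_enc_env)
  show "alg_sub_dom (alg_sub_call1 x)"
    using call1 wf wfT_lookup[OF wf(1) i(1)] i(2) unfolding alg_sub_dom_def by auto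
  show "alg_sub_size (alg_sub_call1 x) < alg_sub_size x"
    using weight_TVar_bound_less[OF i] unfolding call1 unfolding x alg_sub_size_enc by simp
  show "alg_sub_call2 (npair x (alg_sub_code (alg_sub_call1 x))) = alg_sub_call1 x"
    unfolding x by (simp add: alg_sub_call2_def del: alg_sub_call1_def)
  have combine: "alg_sub_combine (npair x p) = nfst p" for p
    unfolding x by (simp add: alg_sub_combine_def Let_def)
  show "alg_sub_code x = alg_sub_combine (npair x (npair (alg_sub_code (alg_sub_call1 x)) r))" for r
    using alg_sub_TVar_iff[OF i T] unfolding combine call1 unfolding x by (simp del: enc_ty_npair)
qed

lemma alg_sub_step_Arr:
  assumes x: "x = npair (enc_env \<Gamma>) (npair (enc_ty (Arr S1 S2)) (enc_ty (Arr T1 T2)))"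
    and wf: "wfE \<Gamma>" "wfT \<Gamma> (Arr S1 S2)" "wfT \<Gamma> (Arr T1 T2)"
  shows "alg_sub_step x"
proof -
  have call1: "alg_sub_call1 x = npair (enc_env \<Gamma>) (npair (enc_ty T1) (enc_ty S1))"
    unfolding x by (simp add: alg_sub_call1_def)
  have call2: "alg_sub_call2 (npair x r) = npair (enc_env \<Gamma>) (npair (enc_ty S2) (enc_ty T2))" for r
    unfolding x by (simp add: alg_sub_call2_def)
  have "alg_sub_dom (alg_sub_call1 x)" "alg_sub_dom (alg_sub_call2 (npair x r))" for r
    using call1 call2 wf unfolding alg_sub_dom_def by auto
  moreover have "alg_sub_size (alg_sub_call1 x) < alg_sub_size x"
    "alg_sub_size (alg_sub_call2 (npair x r)) < alg_sub_size x" for r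
    unfolding call1 call2 unfolding x alg_sub_size_enc by simp_all
  moreover have "alg_sub_code x = alg_sub_combine (npair x (npair (alg_sub_code (alg_sub_call1 x))
      (alg_sub_code (alg_sub_call2 (npair x r)))))" for r
    unfolding call1 call2 unfolding x
    by (simp add: alg_sub_combine_def Let_def alg_sub_Arr_iff del: enc_ty_npair)
      (simp add: alg_sub_code_def)
  ultimately show ?thesis unfolding recursion_step_def Let_def by blast
qed

lemma alg_sub_step_All:
  assumes x: "x = npair (enc_env \<Gamma>) (npair (enc_ty (All S1 S2)) (enc_ty (All T1 T2)))"
    and wf: "wfE \<Gamma>" "wfT \<Gamma> (All S1 S2)" "wfT \<Gamma> (All T1 T2)"
  shows "alg_sub_step x"
proof -
  have call1: "alg_sub_call1 x = npair (enc_env \<Gamma>) (npair (enc_ty T1) (enc_ty S1))"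
    unfolding x by (simp add: alg_sub_call1_def)
  have call2: "alg_sub_call2 (npair x r) =
      npair (enc_env (TVarB Top # \<Gamma>)) (npair (enc_ty S2) (enc_ty T2))" for r
    unfolding x by (simp add: alg_sub_call2_def)
  have wf2: "wfT (TVarB Top # \<Gamma>) S2" "wfT (TVarB Top # \<Gamma>) T2"
    using wf wfT_cong[of "TVarB S1 # \<Gamma>" "TVarB Top # \<Gamma>" S2]
      wfT_cong[of "TVarB T1 # \<Gamma>" "TVarB Top # \<Gamma>" T2]
    by auto
  have weights: "env_weights (TVarB Top # \<Gamma>) = 2 # env_weights \<Gamma>" by simp
  have "alg_sub_dom (alg_sub_call1 x)" using call1 wf unfolding alg_sub_dom_def by auto
  moreover have "alg_sub_dom (alg_sub_call2 (npair x r))" for r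
    unfolding call2 alg_sub_dom_def using wf2 wf(1)
    by (intro exI[of _ "TVarB Top # \<Gamma>"] exI[of _ S2] exI[of _ T2]) simp
  moreover have "alg_sub_size (alg_sub_call1 x) < alg_sub_size x"
    unfolding call1 unfolding x alg_sub_size_enc by simp
  moreover have "alg_sub_size (alg_sub_call2 (npair x r)) < alg_sub_size x" for r
    unfolding call2 unfolding x alg_sub_size_enc weights by simp
  moreover have "alg_sub_code x = alg_sub_combine (npair x (npair (alg_sub_code (alg_sub_call1 x))
      (alg_sub_code (alg_sub_call2 (npair x r)))))" for r
    unfolding call1 call2 unfolding x
    by (simp add: alg_sub_combine_def Let_def alg_sub_All_iff del: enc_ty_npair enc_env_simps)
      (simp add: alg_sub_code_def)
  ultimately show ?thesis unfolding recursion_step_def Let_def by blast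
qed

interpretation alg_sub_machine: recursion_scheme alg_sub_dom alg_sub_code alg_sub_size alg_sub_leaf
  alg_sub_base alg_sub_call1 alg_sub_call2 alg_sub_combine
proof
  show "computable_on alg_sub_dom (\<lambda>x. of_bool (alg_sub_leaf x))"
    unfolding alg_sub_leaf_def Let_def by (intro computable_on_intros)
  show "computable_on (\<lambda>x. alg_sub_dom x \<and> alg_sub_leaf x) alg_sub_base"
    unfolding alg_sub_base_def Let_def by (intro computable_on_intros)
  show "computable_on (\<lambda>x. alg_sub_dom x \<and> \<not> alg_sub_leaf x) alg_sub_call1"
    by (rule computable_alg_sub_call1)
  show "computable_on (\<lambda>y. alg_sub_dom (nfst y) \<and> \<not> alg_sub_leaf (nfst y) \<and>
      nsnd y = alg_sub_code (alg_sub_call1 (nfst y))) alg_sub_call2"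
    unfolding alg_sub_call2_def Let_def
    by (intro computable_on_intros computable_on_comp[OF computable_alg_sub_call1]) auto
  show "computable_on (\<lambda>y. alg_sub_dom (nfst y) \<and> \<not> alg_sub_leaf (nfst y) \<and>
      nfst (nsnd y) = alg_sub_code (alg_sub_call1 (nfst y)) \<and>
      nsnd (nsnd y) = alg_sub_code (alg_sub_call2 (npair (nfst y) (nfst (nsnd y)))))
      alg_sub_combine"
    unfolding alg_sub_combine_def Let_def by (intro computable_on_intros)
  show "alg_sub_code x = alg_sub_base x" if dom: "alg_sub_dom x" and leaf: "alg_sub_leaf x" for x
  proof -
    obtain \<Gamma> S T where x: "x = npair (enc_env \<Gamma>) (npair (enc_ty S) (enc_ty T))"
      using dom unfolding alg_sub_dom_def by blast
    show ?thesis using leaf unfolding x alg_sub_code_enc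
      by (cases S; cases T)
        (auto simp: alg_sub_leaf_def alg_sub_base_def alg_sub_mismatch AS_Top AS_Refl)
  qed
  show "alg_sub_step x"
    if "alg_sub_dom x" and "\<not> alg_sub_leaf x" for x
    using that by (cases rule: alg_sub_dom_node)
      (auto intro: alg_sub_step_TVar alg_sub_step_Arr alg_sub_step_All)
qed

lemma computable_on_alg_sub_code:
  "computable_on P a \<Longrightarrow> (\<And>x. P x \<Longrightarrow> alg_sub_dom (a x)) \<Longrightarrow> computable_on P (\<lambda>x. alg_sub_code (a x))"
  by (rule computable_on_comp[OF alg_sub_machine.computable])

abbreviation check_input :: "env \<Rightarrow> trm \<Rightarrow> ty \<Rightarrow> nat" where
  "check_input \<Gamma> t T \<equiv> npair 0 (npair (enc_env \<Gamma>) (npair (enc_trm t) (enc_ty T)))"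

abbreviation synth_input :: "env \<Rightarrow> trm \<Rightarrow> nat" where
  "synth_input \<Gamma> t \<equiv> npair 1 (npair (enc_env \<Gamma>) (npair (enc_trm t) 0))"

text \<open>Checking and synthesis call each other, so they are computed by a single machine. On the
  input \<open>check_input \<Gamma> t T\<close> it answers 1 or 0 according to whether \<open>t\<close> has type \<open>T\<close>;
  on \<open>synth_input \<Gamma> t\<close> it answers \<open>Suc (enc_ty M)\<close> if \<open>M\<close> is synthesised for \<open>t\<close>, and 0
  on failure. Checking a neutral term hands the same term to synthesis, which is why checking
  weighs one more than synthesis in \<open>tc_size\<close>.\<close>

abbreviation tc_env :: "nat \<Rightarrow> nat" where "tc_env x \<equiv> nfst (nsnd x)"
abbreviation tc_trm :: "nat \<Rightarrow> nat" where "tc_trm x \<equiv> nfst (nsnd (nsnd x))"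
abbreviation tc_ty :: "nat \<Rightarrow> nat" where "tc_ty x \<equiv> nsnd (nsnd (nsnd x))"
abbreviation tc_tag :: "nat \<Rightarrow> nat" where "tc_tag x \<equiv> nfst (tc_trm x)"
abbreviation tc_fields :: "nat \<Rightarrow> nat" where "tc_fields x \<equiv> nsnd (tc_trm x)"

definition tc_dom :: "nat \<Rightarrow> bool" where
  "tc_dom x \<longleftrightarrow> (\<exists>\<Gamma> t. wfE \<Gamma> \<and> wf_trm \<Gamma> t \<and> beta_normal t \<and>
     ((\<exists>T. wfT \<Gamma> T \<and> x = check_input \<Gamma> t T) \<or> x = synth_input \<Gamma> t))"

definition tc_code :: "nat \<Rightarrow> nat" where
  "tc_code x = (let \<Gamma> = dec_env (tc_env x); t = dec_trm (tc_trm x) in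
     if nfst x = 0 then of_bool (\<Gamma> \<turnstile>\<^sub>t t : dec_ty (tc_ty x))
     else case synth \<Gamma> t of None \<Rightarrow> 0 | Some M \<Rightarrow> Suc (enc_ty M))"

definition tc_size :: "nat \<Rightarrow> nat" where
  "tc_size x = 2 * size (dec_trm (tc_trm x)) + (if nfst x = 0 then 1 else 0)"

definition tc_leaf :: "nat \<Rightarrow> bool" where "tc_leaf x \<longleftrightarrow> nfst x \<noteq> 0 \<and> tc_tag x < 4"

definition tc_base :: "nat \<Rightarrow> nat" where
  "tc_base x = (if tc_tag x = 0 then Suc (enc_ty Top)
     else if tc_tag x = 1 then Suc (bound_code (tc_env x) (tc_fields x)) else 0)"

definition tc_call1 :: "nat \<Rightarrow> nat" where
  "tc_call1 x = (let G = tc_env x; fs = tc_fields x; T = tc_ty x in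
     if nfst x = 0 then
       (if tc_tag x = 2 then npair 0 (npair (Suc (npair (npair 0 (nfst fs)) G))
          (npair (nsnd fs)
            (if nfst T = 2 then lift_code (npair 1 (npair 0 (nsnd (nsnd T)))) else enc_ty Top)))
        else if tc_tag x = 3 then npair 0 (npair (Suc (npair (npair 1 (nfst fs)) G))
          (npair (nsnd fs) (if nfst T = 3 then nsnd (nsnd T) else enc_ty Top)))
        else npair 1 (npair G (npair (tc_trm x) 0)))
     else npair 1 (npair G (npair (nfst fs) 0)))"

definition tc_call2 :: "nat \<Rightarrow> nat" where
  "tc_call2 y = (let x = nfst y; r = nsnd y in
     if nfst x \<noteq> 0 \<and> tc_tag x = 4 \<and> r \<noteq> 0 then
       (let M = exposure_code (npair (tc_env x) (r - 1)) in
        if nfst M = 2 then npair 0 (npair (tc_env x) (npair (nsnd (tc_fields x)) (nfst (nsnd M))))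
        else tc_call1 x)
     else tc_call1 x)"

definition tc_combine :: "nat \<Rightarrow> nat" where
  "tc_combine y = (let x = nfst y; G = tc_env x; fs = tc_fields x; T = tc_ty x;
       r1 = nfst (nsnd y); r2 = nsnd (nsnd y) in
     if nfst x = 0 then
       (if tc_tag x = 2 then
          (if nfst T = 0 then r1
           else if nfst T = 2 then alg_sub_code (npair G (npair (nfst (nsnd T)) (nfst fs))) * r1
           else 0)
        else if tc_tag x = 3 then
          (if nfst T = 0 then r1
           else if nfst T = 3 then alg_sub_code (npair G (npair (nfst (nsnd T)) (nfst fs))) * r1
           else 0)
        else if r1 = 0 then 0 else alg_sub_code (npair G (npair (r1 - 1) T)))
     else if r1 = 0 then 0
     else (let M = exposure_code (npair G (r1 - 1)) in
       if tc_tag x = 4 then (if nfst M = 2 \<and> r2 = 1 then Suc (nsnd (nsnd M)) else 0)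
       else if nfst M = 3 then
         (if alg_sub_code (npair G (npair (nsnd fs) (nfst (nsnd M)))) = 1
          then Suc (subst_code (npair (nsnd (nsnd M)) (npair 0 (nsnd fs)))) else 0)
       else 0))"

lemma tc_dom_checkI:
  "wfE \<Gamma> \<Longrightarrow> wf_trm \<Gamma> t \<Longrightarrow> beta_normal t \<Longrightarrow> wfT \<Gamma> T \<Longrightarrow> tc_dom (check_input \<Gamma> t T)"
  unfolding tc_dom_def by blast

lemma tc_dom_synthI: "wfE \<Gamma> \<Longrightarrow> wf_trm \<Gamma> t \<Longrightarrow> beta_normal t \<Longrightarrow> tc_dom (synth_input \<Gamma> t)"
  unfolding tc_dom_def by blast

lemma tc_dom_checkE:
  assumes "tc_dom x" and "nfst x = 0"
  obtains \<Gamma> t T where "x = check_input \<Gamma> t T" "wfE \<Gamma>" "wf_trm \<Gamma> t" "beta_normal t" "wfT \<Gamma> T"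
  using assms unfolding tc_dom_def by auto

lemma tc_dom_synthE:
  assumes "tc_dom x" and "nfst x \<noteq> 0"
  obtains \<Gamma> t where "x = synth_input \<Gamma> t" "wfE \<Gamma>" "wf_trm \<Gamma> t" "beta_normal t"
  using assms unfolding tc_dom_def by auto

lemma tc_code_check: "tc_code (check_input \<Gamma> t T) = of_bool (\<Gamma> \<turnstile>\<^sub>t t : T)"
  by (simp add: tc_code_def Let_def)

lemma tc_code_synth:
  "tc_code (synth_input \<Gamma> t) = (case synth \<Gamma> t of None \<Rightarrow> 0 | Some M \<Rightarrow> Suc (enc_ty M))"
  by (simp add: tc_code_def Let_def)

lemma tc_size_check: "tc_size (check_input \<Gamma> t T) = 2 * size t + 1"
  by (simp add: tc_size_def)

lemma tc_size_synth: "tc_size (synth_input \<Gamma> t) = 2 * size t"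
  by (simp add: tc_size_def)

lemma wfT_synth: "wfE \<Gamma> \<Longrightarrow> wf_trm \<Gamma> t \<Longrightarrow> synth \<Gamma> t = Some M \<Longrightarrow> wfT \<Gamma> M"
  using typing_wf[OF synth_sound] by blast

lemma tc_synth_node:
  assumes "tc_dom x" and "nfst x \<noteq> 0" and "\<not> tc_leaf x"
  obtains \<Gamma> s where "tc_env x = enc_env \<Gamma>" "wfE \<Gamma>" "wf_trm \<Gamma> s" "tc_call1 x = synth_input \<Gamma> s"
    "tc_tag x = 4 \<or> (\<exists>S'. wfT \<Gamma> S' \<and> nsnd (tc_fields x) = enc_ty S')"
proof -
  obtain \<Gamma> t where x: "x = synth_input \<Gamma> t" "wfE \<Gamma>" "wf_trm \<Gamma> t"
    using assms(1,2) by (rule tc_dom_synthE)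
  show ?thesis using assms(3) that x by (cases t) (auto simp: tc_leaf_def tc_call1_def)
qed

lemma tc_synth_result:
  assumes "tc_dom x" and "nfst x \<noteq> 0" and "\<not> tc_leaf x" and "tc_code (tc_call1 x) \<noteq> 0"
  obtains \<Gamma> M where "tc_env x = enc_env \<Gamma>" "wfE \<Gamma>" "wfT \<Gamma> M" "tc_code (tc_call1 x) = Suc (enc_ty M)"
    "tc_tag x = 4 \<or> (\<exists>S'. wfT \<Gamma> S' \<and> nsnd (tc_fields x) = enc_ty S')"
proof -
  obtain \<Gamma> s where s: "tc_env x = enc_env \<Gamma>" "wfE \<Gamma>" "wf_trm \<Gamma> s" "tc_call1 x = synth_input \<Gamma> s"
    "tc_tag x = 4 \<or> (\<exists>S'. wfT \<Gamma> S' \<and> nsnd (tc_fields x) = enc_ty S')"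
    using assms(1-3) by (rule tc_synth_node)
  then obtain M where "synth \<Gamma> s = Some M" "tc_code (tc_call1 x) = Suc (enc_ty M)"
    using assms(4) unfolding s(4) tc_code_synth by (auto split: option.splits)
  then show ?thesis using that s wfT_synth[OF s(2,3)] by blast
qed

lemma tc_call1_Abs:
  "tc_call1 (check_input \<Gamma> (Abs S u) T) =
    check_input (VarB S # \<Gamma>) u (case T of Arr T1 T2 \<Rightarrow> liftT 1 0 T2 | _ \<Rightarrow> Top)"
  by (cases T) (simp_all add: tc_call1_def)

lemma tc_call1_TAbs:
  "tc_call1 (check_input \<Gamma> (TAbs S u) T) =
    check_input (TVarB S # \<Gamma>) u (case T of All T1 T2 \<Rightarrow> T2 | _ \<Rightarrow> Top)"
  by (cases T) (simp_all add: tc_call1_def)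

lemma tc_call1_neutral: "\<not> is_abs t \<Longrightarrow> tc_call1 (check_input \<Gamma> t T) = synth_input \<Gamma> t"
  by (cases t) (simp_all add: tc_call1_def)

lemma tc_call1_App: "tc_call1 (synth_input \<Gamma> (App s u)) = synth_input \<Gamma> s"
  by (simp add: tc_call1_def)

lemma tc_call1_TApp: "tc_call1 (synth_input \<Gamma> (TApp s S)) = synth_input \<Gamma> s"
  by (simp add: tc_call1_def)

lemma tc_call2_check: "nfst x = 0 \<Longrightarrow> tc_call2 (npair x r) = tc_call1 x"
  by (simp add: tc_call2_def)

lemma tc_call2_TApp: "tc_call2 (npair (synth_input \<Gamma> (TApp s S)) r) = synth_input \<Gamma> s"
  by (simp add: tc_call2_def tc_call1_def)

lemma tc_call2_App:
  "tc_call2 (npair (synth_input \<Gamma> (App s u)) r) =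
    (case (r, expose \<Gamma> (dec_ty (r - 1))) of
      (Suc _, Arr A B) \<Rightarrow> check_input \<Gamma> u A
    | _ \<Rightarrow> synth_input \<Gamma> s)"
  by (cases r; cases "expose \<Gamma> (dec_ty (r - 1))")
    (simp_all add: tc_call2_def tc_call1_def exposure_code_def)

lemma tc_combine_Abs:
  "tc_combine (npair (check_input \<Gamma> (Abs S u) T) (npair r1 r2)) =
    (case T of Top \<Rightarrow> r1 | Arr T1 T2 \<Rightarrow> of_bool (alg_sub \<Gamma> T1 S) * r1 | _ \<Rightarrow> 0)"
  by (cases T) (simp_all add: tc_combine_def alg_sub_code_def)

lemma tc_combine_TAbs:
  "tc_combine (npair (check_input \<Gamma> (TAbs S u) T) (npair r1 r2)) =
    (case T of Top \<Rightarrow> r1 | All T1 T2 \<Rightarrow> of_bool (alg_sub \<Gamma> T1 S) * r1 | _ \<Rightarrow> 0)"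
  by (cases T) (simp_all add: tc_combine_def alg_sub_code_def)

lemma tc_combine_neutral:
  "\<not> is_abs t \<Longrightarrow> tc_combine (npair (check_input \<Gamma> t T) (npair r1 r2)) =
    (if r1 = 0 then 0 else of_bool (alg_sub \<Gamma> (dec_ty (r1 - 1)) T))"
  by (cases t) (simp_all add: tc_combine_def alg_sub_code_def)

lemma tc_combine_App:
  "tc_combine (npair (synth_input \<Gamma> (App s u)) (npair r1 r2)) =
    (if r1 = 0 then 0
     else case expose \<Gamma> (dec_ty (r1 - 1)) of
       Arr A B \<Rightarrow> (if r2 = 1 then Suc (enc_ty B) else 0)
     | _ \<Rightarrow> 0)"
  by (cases "expose \<Gamma> (dec_ty (r1 - 1))") (simp_all add: tc_combine_def exposure_code_def)

lemma tc_combine_TApp: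
  "tc_combine (npair (synth_input \<Gamma> (TApp s S')) (npair r1 r2)) =
    (if r1 = 0 then 0
     else case expose \<Gamma> (dec_ty (r1 - 1)) of
       All A B \<Rightarrow> (if alg_sub \<Gamma> S' A then Suc (enc_ty (substT B 0 S')) else 0)
     | _ \<Rightarrow> 0)"
  by (cases "expose \<Gamma> (dec_ty (r1 - 1))")
    (simp_all add: tc_combine_def exposure_code_def alg_sub_code_def subst_code_def)

abbreviation tc_step :: "nat \<Rightarrow> bool" where
  "tc_step \<equiv> recursion_step tc_dom tc_code tc_size tc_call1 tc_call2 tc_combine"

lemma tc_step_Abs:
  assumes wf: "wfE \<Gamma>" "wf_trm \<Gamma> (Abs S u)" "beta_normal (Abs S u)" "wfT \<Gamma> T"
  shows "tc_step (check_input \<Gamma> (Abs S u) T)" (is "tc_step ?x")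
proof (rule recursion_step_one_call)
  define T' where "T' = (case T of Arr T1 T2 \<Rightarrow> liftT 1 0 T2 | _ \<Rightarrow> Top)"
  have call1: "tc_call1 ?x = check_input (VarB S # \<Gamma>) u T'"
    unfolding T'_def by (rule tc_call1_Abs)
  have "wfT (VarB S # \<Gamma>) T'"
    unfolding T'_def using wf(4) wfT_liftT0[of \<Gamma> _ "[VarB S]"] by (cases T) simp_all
  then show "tc_dom (tc_call1 ?x)"
    unfolding call1 using wf by (intro tc_dom_checkI) simp_all
  show "tc_size (tc_call1 ?x) < tc_size ?x"
    unfolding call1 tc_size_check by simp
  show "tc_code ?x = tc_combine (npair ?x (npair (tc_code (tc_call1 ?x)) r))" for r
    unfolding call1 tc_code_check tc_combine_Abs using typing_Abs_iff[of \<Gamma> S T u] wf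
    by (cases T) (auto simp: T'_def)
qed (simp add: tc_call2_check)

lemma tc_step_TAbs:
  assumes wf: "wfE \<Gamma>" "wf_trm \<Gamma> (TAbs S u)" "beta_normal (TAbs S u)" "wfT \<Gamma> T"
  shows "tc_step (check_input \<Gamma> (TAbs S u) T)" (is "tc_step ?x")
proof (rule recursion_step_one_call)
  define T' where "T' = (case T of All T1 T2 \<Rightarrow> T2 | _ \<Rightarrow> Top)"
  have call1: "tc_call1 ?x = check_input (TVarB S # \<Gamma>) u T'"
    unfolding T'_def by (rule tc_call1_TAbs)
  have "wfT (TVarB S # \<Gamma>) T'"
  proof (cases T)
    case (All T1 T2)
    then show ?thesis using wf(4) wfT_cong[of "TVarB T1 # \<Gamma>" "TVarB S # \<Gamma>" T2] by (simp add: T'_def)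
  qed (simp_all add: T'_def)
  then show "tc_dom (tc_call1 ?x)"
    unfolding call1 using wf by (intro tc_dom_checkI) simp_all
  show "tc_size (tc_call1 ?x) < tc_size ?x"
    unfolding call1 tc_size_check by simp
  show "tc_code ?x = tc_combine (npair ?x (npair (tc_code (tc_call1 ?x)) r))" for r
    unfolding call1 tc_code_check tc_combine_TAbs using typing_TAbs_iff[of \<Gamma> S T u] wf
    by (cases T) (auto simp: T'_def)
qed (simp add: tc_call2_check)

lemma tc_step_neutral:
  assumes wf: "wfE \<Gamma>" "wf_trm \<Gamma> t" "beta_normal t" "wfT \<Gamma> T" and neutral: "\<not> is_abs t"
  shows "tc_step (check_input \<Gamma> t T)" (is "tc_step ?x")
proof (rule recursion_step_one_call)
  have call1: "tc_call1 ?x = synth_input \<Gamma> t" by (rule tc_call1_neutral[OF neutral])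
  show "tc_dom (tc_call1 ?x)" unfolding call1 using wf(1-3) by (rule tc_dom_synthI)
  show "tc_size (tc_call1 ?x) < tc_size ?x"
    unfolding call1 tc_size_check tc_size_synth by simp
  show "tc_code ?x = tc_combine (npair ?x (npair (tc_code (tc_call1 ?x)) r))" for r
    unfolding call1 tc_code_check tc_code_synth tc_combine_neutral[OF neutral]
    using typing_neutral_iff[OF wf(1,2,4,3) neutral] by (cases "synth \<Gamma> t") auto
qed (simp add: tc_call2_check)

lemma tc_step_TApp:
  assumes wf: "wfE \<Gamma>" "wf_trm \<Gamma> (TApp s S')" "beta_normal (TApp s S')"
  shows "tc_step (synth_input \<Gamma> (TApp s S'))" (is "tc_step ?x")
proof (rule recursion_step_one_call)
  show "tc_dom (tc_call1 ?x)"
    unfolding tc_call1_TApp using wf by (intro tc_dom_synthI) simp_all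
  show "tc_code ?x = tc_combine (npair ?x (npair (tc_code (tc_call1 ?x)) r))" for r
    unfolding tc_call1_TApp tc_code_synth tc_combine_TApp
    by (cases "synth \<Gamma> s"; simp; case_tac "expose \<Gamma> a"; simp)
  show "tc_size (tc_call1 ?x) < tc_size ?x"
    unfolding tc_call1_TApp tc_size_synth by simp
  show "tc_call2 (npair ?x (tc_code (tc_call1 ?x))) = tc_call1 ?x"
    unfolding tc_call2_TApp tc_call1_TApp ..
qed

lemma tc_step_App:
  assumes wf: "wfE \<Gamma>" "wf_trm \<Gamma> (App s u)" "beta_normal (App s u)"
  shows "tc_step (synth_input \<Gamma> (App s u))"
proof -
  define x where "x = synth_input \<Gamma> (App s u)"
  have call1: "tc_call1 x = synth_input \<Gamma> s" unfolding x_def by (rule tc_call1_App)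
  have dom1: "tc_dom (tc_call1 x)" unfolding call1 using wf by (intro tc_dom_synthI) simp_all
  have size1: "tc_size (tc_call1 x) < tc_size x"
    unfolding call1 unfolding x_def tc_size_synth by simp
  show ?thesis
  proof (cases "\<exists>M A B. synth \<Gamma> s = Some M \<and> expose \<Gamma> M = Arr A B")
    case True
    then obtain M A B where M: "synth \<Gamma> s = Some M" "expose \<Gamma> M = Arr A B" by blast
    have "wfT \<Gamma> (Arr A B)" using wfT_expose[OF wf(1) wfT_synth[OF wf(1) _ M(1)]] M(2) wf(2) by simp
    moreover have call2: "tc_call2 (npair x (tc_code (tc_call1 x))) = check_input \<Gamma> u A"
      unfolding call1 tc_code_synth unfolding x_def tc_call2_App using M by simp
    ultimately have "tc_dom (tc_call2 (npair x (tc_code (tc_call1 x))))"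
      using wf unfolding call2 by (intro tc_dom_checkI) simp_all
    moreover have "tc_size (tc_call2 (npair x (tc_code (tc_call1 x)))) < tc_size x"
      unfolding call2 unfolding x_def tc_size_check tc_size_synth by simp
    moreover have "tc_code x =
        tc_combine (npair x (npair (tc_code (tc_call1 x))
          (tc_code (tc_call2 (npair x (tc_code (tc_call1 x)))))))"
      unfolding call2 tc_code_check unfolding call1 tc_code_synth
      unfolding x_def tc_code_synth tc_combine_App
      using M by simp
    ultimately show ?thesis
      using dom1 size1 unfolding x_def[symmetric] recursion_step_def Let_def by blast
  next
    case False
    then have call2: "tc_call2 (npair x (tc_code (tc_call1 x))) = tc_call1 x"
      unfolding call1 tc_code_synth unfolding x_def tc_call2_App
      by (cases "synth \<Gamma> s"; simp; case_tac "expose \<Gamma> a"; simp)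
    show ?thesis unfolding x_def[symmetric]
    proof (rule recursion_step_one_call)
      show "tc_code x = tc_combine (npair x (npair (tc_code (tc_call1 x)) r))" for r
        using False unfolding call1 tc_code_synth unfolding x_def tc_code_synth tc_combine_App
        by (cases "synth \<Gamma> s"; simp; case_tac "expose \<Gamma> a"; simp)
    qed (rule dom1 size1 call2)+
  qed
qed

lemma tc_step_node: "tc_dom x \<Longrightarrow> \<not> tc_leaf x \<Longrightarrow> tc_step x"
proof -
  assume dom: "tc_dom x" and node: "\<not> tc_leaf x"
  show ?thesis
  proof (cases "nfst x = 0")
    case True
    with dom obtain \<Gamma> t T
      where x: "x = check_input \<Gamma> t T" "wfE \<Gamma>" "wf_trm \<Gamma> t" "beta_normal t" "wfT \<Gamma> T"
      by (rule tc_dom_checkE)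
    show ?thesis
    proof (cases t)
      case (Abs S u)
      then show ?thesis using tc_step_Abs x by simp
    next
      case (TAbs S u)
      then show ?thesis using tc_step_TAbs x by simp
    qed (use x(1) tc_step_neutral[OF x(2-5)] in simp_all)
  next
    case False
    with dom obtain \<Gamma> t where x: "x = synth_input \<Gamma> t" "wfE \<Gamma>" "wf_trm \<Gamma> t" "beta_normal t"
      by (rule tc_dom_synthE)
    show ?thesis
    proof (cases t)
      case (App s u)
      then show ?thesis using tc_step_App x by simp
    next
      case (TApp s S)
      then show ?thesis using tc_step_TApp x by simp
    qed (use node x in \<open>auto simp: tc_leaf_def\<close>)
  qed
qed

lemma tc_code_leaf: "tc_dom x \<Longrightarrow> tc_leaf x \<Longrightarrow> tc_code x = tc_base x"
proof -
  assume dom: "tc_dom x" and leaf: "tc_leaf x"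
  then obtain \<Gamma> t where x: "x = synth_input \<Gamma> t" "wfE \<Gamma>" "wf_trm \<Gamma> t"
    by (auto simp: tc_leaf_def elim: tc_dom_synthE)
  show ?thesis
  proof (cases t)
    case (Var i)
    then obtain U where "i < length \<Gamma>" "\<Gamma> ! i = VarB U" using x is_VarB_iff by auto
    then show ?thesis unfolding x(1) Var
      by (simp add: tc_code_def Let_def tc_base_def bound_code_enc_env del: enc_ty_npair)
  qed (use leaf x in \<open>auto simp: tc_code_def Let_def tc_base_def tc_leaf_def\<close>)
qed

lemma tc_bound_dom:
  assumes "tc_dom x" and "tc_leaf x" and "tc_tag x = 1"
  shows "\<exists>\<Gamma>. tc_env x = enc_env \<Gamma> \<and> tc_fields x < length \<Gamma>"
proof -
  obtain \<Gamma> t where x: "x = synth_input \<Gamma> t" "wf_trm \<Gamma> t"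
    using assms(1,2) by (auto simp: tc_leaf_def elim: tc_dom_synthE)
  then show ?thesis using assms(3) by (cases t) auto
qed

lemma tc_lift_dom:
  assumes "tc_dom x" and "nfst x = 0" and "nfst (tc_ty x) = 2"
  shows "lift_dom (npair 1 (npair 0 (nsnd (nsnd (tc_ty x)))))"
proof -
  obtain \<Gamma> t T where "x = check_input \<Gamma> t T" using assms(1,2) by (rule tc_dom_checkE)
  then show ?thesis using assms(3) by (cases T) (auto simp: lift_dom_def)
qed

lemma tc_alg_sub_dom_abs:
  assumes "tc_dom x" and "nfst x = 0"
    and "(tc_tag x = 2 \<and> nfst (tc_ty x) = 2) \<or> (tc_tag x = 3 \<and> nfst (tc_ty x) = 3)"
  shows "alg_sub_dom (npair (tc_env x) (npair (nfst (nsnd (tc_ty x))) (nfst (tc_fields x))))"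
proof -
  obtain \<Gamma> t T where x: "x = check_input \<Gamma> t T" "wfE \<Gamma>" "wf_trm \<Gamma> t" "wfT \<Gamma> T"
    using assms(1,2) by (rule tc_dom_checkE)
  show ?thesis using assms(3) x unfolding alg_sub_dom_def by (cases t; cases T) auto
qed

lemma tc_alg_sub_dom_neutral:
  assumes "tc_dom x" and "nfst x = 0" and "tc_tag x \<noteq> 2" and "tc_tag x \<noteq> 3"
    and "r = tc_code (tc_call1 x)" and "r \<noteq> 0"
  shows "alg_sub_dom (npair (tc_env x) (npair (r - 1) (tc_ty x)))"
proof -
  obtain \<Gamma> t T where x: "x = check_input \<Gamma> t T" "wfE \<Gamma>" "wf_trm \<Gamma> t" "wfT \<Gamma> T"
    using assms(1,2) by (rule tc_dom_checkE)
  have neutral: "\<not> is_abs t" using assms(3,4) x(1) by (cases t) auto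
  obtain M where M: "synth \<Gamma> t = Some M" "r = Suc (enc_ty M)"
    using assms(5,6) unfolding x(1) tc_call1_neutral[OF neutral] tc_code_synth
    by (auto split: option.splits)
  show ?thesis using wfT_synth[OF x(2,3) M(1)] x M unfolding alg_sub_dom_def by auto
qed

lemma tc_exposure_dom:
  assumes "tc_dom x" and "nfst x \<noteq> 0" and "\<not> tc_leaf x"
    and "r = tc_code (tc_call1 x)" and "r \<noteq> 0"
  shows "exposure_dom (npair (tc_env x) (r - 1))"
  using assms(1-3) assms(5) unfolding assms(4)
  by (rule tc_synth_result) (auto simp: exposure_dom_def)

lemma tc_TApp_dom:
  assumes "tc_dom x" and "nfst x \<noteq> 0" and "\<not> tc_leaf x" and "tc_tag x \<noteq> 4"
    and "r = tc_code (tc_call1 x)" and "r \<noteq> 0"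
    and "nfst (exposure_code (npair (tc_env x) (r - 1))) = 3"
  shows "alg_sub_dom (npair (tc_env x) (npair (nsnd (tc_fields x))
      (nfst (nsnd (exposure_code (npair (tc_env x) (r - 1)))))))" (is ?alg_sub)
    and "subst_dom (npair (nsnd (nsnd (exposure_code (npair (tc_env x) (r - 1)))))
      (npair 0 (nsnd (tc_fields x))))" (is ?subst)
proof -
  obtain \<Gamma> M where M: "tc_env x = enc_env \<Gamma>" "wfE \<Gamma>" "wfT \<Gamma> M" "r = Suc (enc_ty M)"
    and S': "\<exists>S'. wfT \<Gamma> S' \<and> nsnd (tc_fields x) = enc_ty S'"
    using assms(1-3) assms(6) unfolding assms(5) by (rule tc_synth_result) (use assms(4) in auto)
  have exposed: "exposure_code (npair (tc_env x) (r - 1)) = enc_ty (expose \<Gamma> M)" using M by simp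
  then obtain A B where AB: "expose \<Gamma> M = All A B" using assms(7) by (cases "expose \<Gamma> M") auto
  have "wfT \<Gamma> A" using wfT_expose[OF M(2,3)] AB by simp
  then show ?alg_sub and ?subst
    using S' M unfolding exposed AB by (auto simp: alg_sub_dom_def subst_dom_def)
qed

lemma computable_tc_call1: "computable_on (\<lambda>x. tc_dom x \<and> \<not> tc_leaf x) tc_call1"
  unfolding tc_call1_def Let_def
  by (intro computable_on_intros computable_on_lift_code) (blast intro: tc_lift_dom)

interpretation tc_machine: recursion_scheme tc_dom tc_code tc_size tc_leaf tc_base
  tc_call1 tc_call2 tc_combine
proof
  show "computable_on tc_dom (\<lambda>x. of_bool (tc_leaf x))"
    unfolding tc_leaf_def by (intro computable_on_intros)
  show "computable_on (\<lambda>x. tc_dom x \<and> tc_leaf x) tc_base"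
    unfolding tc_base_def
    by (intro computable_on_intros computable_on_bound_code) (auto intro: tc_bound_dom)
  show "computable_on (\<lambda>x. tc_dom x \<and> \<not> tc_leaf x) tc_call1" by (rule computable_tc_call1)
  show "computable_on (\<lambda>y. tc_dom (nfst y) \<and> \<not> tc_leaf (nfst y) \<and>
      nsnd y = tc_code (tc_call1 (nfst y))) tc_call2"
    unfolding tc_call2_def Let_def
    by (intro computable_on_intros computable_on_exposure_code
        computable_on_comp[OF computable_tc_call1])
      (blast intro: tc_exposure_dom)+
  show "computable_on (\<lambda>y. tc_dom (nfst y) \<and> \<not> tc_leaf (nfst y) \<and>
      nfst (nsnd y) = tc_code (tc_call1 (nfst y)) \<and>
      nsnd (nsnd y) = tc_code (tc_call2 (npair (nfst y) (nfst (nsnd y))))) tc_combine"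
    unfolding tc_combine_def Let_def
    by (intro computable_on_intros computable_on_exposure_code computable_on_alg_sub_code
        computable_on_subst_code)
      (blast intro: tc_alg_sub_dom_abs tc_alg_sub_dom_neutral tc_exposure_dom tc_TApp_dom)+
  show "tc_dom x \<Longrightarrow> tc_leaf x \<Longrightarrow> tc_code x = tc_base x" for x by (rule tc_code_leaf)
  show "tc_dom x \<Longrightarrow> \<not> tc_leaf x \<Longrightarrow> tc_step x" for x by (rule tc_step_node)
qed

lemma computable_typing:
  "computable_on (\<lambda>y. \<exists>\<Gamma> t T. y = enc_input \<Gamma> t T \<and> wfE \<Gamma> \<and> wf_trm \<Gamma> t \<and> beta_normal t \<and> wfT \<Gamma> T)
    (\<lambda>y. tc_code (npair 0 y))"
  by (rule computable_on_comp[OF tc_machine.computable])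
    (auto simp: enc_input_def npair_def[symmetric] intro: computable_on_intros tc_dom_checkI)

theorem corollary8p6:
  "\<exists>f :: recf. \<forall>\<Gamma> t T.
     wfE \<Gamma> \<longrightarrow> wf_trm \<Gamma> t \<longrightarrow> beta_normal t \<longrightarrow> wfT \<Gamma> T \<longrightarrow>
     rec_eval f [enc_input \<Gamma> t T] (if \<Gamma> \<turnstile>\<^sub>t t : T then 1 else 0)"
proof -
  obtain f where f: "\<And>\<Gamma> t T. wfE \<Gamma> \<Longrightarrow> wf_trm \<Gamma> t \<Longrightarrow> beta_normal t \<Longrightarrow> wfT \<Gamma> T \<Longrightarrow>
      rec_eval f [enc_input \<Gamma> t T] (tc_code (npair 0 (enc_input \<Gamma> t T)))"
    using computable_typing unfolding computable_on_def by blast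
  have answer: "tc_code (npair 0 (enc_input \<Gamma> t T)) = (if \<Gamma> \<turnstile>\<^sub>t t : T then 1 else 0)" for \<Gamma> t T
    using tc_code_check[of \<Gamma> t T] by (simp add: enc_input_def npair_def)
  show ?thesis using f unfolding answer by blast
qed

end
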